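(* For every integer $n\ge1$, the Wang shift $\Omega_n$ is aperiodic, i.e., $\Omega_n$ is nonempty and no configuration $x\in\Omega_n$ satisfies $\sigma^{\mathbf k}(x)=x$ for a nonzero vector $\mathbf k\in\mathbb{Z}^2$.
   Context: Fix an integer $n\ge1$. Let $V_n=\{(v_0,v_1,v_2)\in\mathbb{Z}^3: 0\le v_0\le v_1\le 1,\ v_1\le v_2\le n+1\}$; write $(v_0,v_1,v_2)$ as the word $v_0v_1v_2$. A Wang tile is a quadruple $t=(a,b,c,d)$ of labels with $\mathrm{RIGHT}(t)=a$, $\mathrm{TOP}(t)=b$, $\mathrm{LEFT}(t)=c$, $\mathrm{BOTTOM}(t)=d$. For $t=(a,b,c,d)$ let $\hat t=(b,a,d,c)$ and $\hat S=\{\hat t: t\in S\}$. Define (tiles written as (right, top, left, bottom)): $W_n=\{(11(i+1),11(j+1),11i,11j):1\le i,j\le n\}$; $b_n^i=(00(i+1),111,00i,11n)$, $B_n=\{b_n^i:0\le i\le n-1\}$; $g_n^i=(01(i+1),111,00i,11(n+1))$, $G_n=\{g_n^i:0\le i\le n\}$; $y_n^i=(01(i+1),112,01i,11(n+1))$, $Y_n=\{y_n^i:1\le i\le n\}$; junction tiles $j_n^{k,l,r,s}=((0,k,l),(0,r,s),(0,s,r+n),(0,l,k+n))$ for $(k,l),(r,s)\in\{(0,0),(0,1),(1,1)\}$; $J_n$ is the set of these 9 tiles minus $j_n^{0,0,1,1}$ and $j_n^{1,1,0,0}$. $\mathcal{T}_n=W_n\cup B_n\cup G_n\cup Y_n\cup\hat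 B_n\cup\hat G_n\cup\hat Y_n\cup J_n$. A configuration $x:\mathbb{Z}^2\to\mathcal{T}_n$ is valid if $\mathrm{RIGHT}(x(\mathbf m))=\mathrm{LEFT}(x(\mathbf m+\mathbf e_1))$ and $\mathrm{TOP}(x(\mathbf m))=\mathrm{BOTTOM}(x(\mathbf m+\mathbf e_2))$ for all $\mathbf m$; $\Omega_n$ is the set of valid configurations, with shift $(\sigma^{\mathbf k}x)_{\mathbf m}=x_{\mathbf m+\mathbf k}$. *)

theory Defs
  imports Main
begin

text \<open>Labels are words v0 v1 v2, encoded as integer triples (v0, v1, v2).
Tiles are quadruples (right, top, left, bottom).\<close>

type_synonym label = "int \<times> int \<times> int"
type_synonym tile = "label \<times> label \<times> label \<times> label"

definition RIGHT :: "tile \<Rightarrow> label" where "RIGHT t = (case t of (a,b,c,d) \<Rightarrow> a)"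
definition TOP :: "tile \<Rightarrow> label" where "TOP t = (case t of (a,b,c,d) \<Rightarrow> b)"
definition LEFT :: "tile \<Rightarrow> label" where "LEFT t = (case t of (a,b,c,d) \<Rightarrow> c)"
definition BOTTOM :: "tile \<Rightarrow> label" where "BOTTOM t = (case t of (a,b,c,d) \<Rightarrow> d)"

definition hat :: "tile \<Rightarrow> tile" where
  "hat t = (case t of (a,b,c,d) \<Rightarrow> (b,a,d,c))"

definition W :: "nat \<Rightarrow> tile set" where
  "W n = {((1,1,i+1),(1,1,j+1),(1,1,i),(1,1,j)) | i j. 1 \<le> i \<and> i \<le> int n \<and> 1 \<le> j \<and> j \<le> int n}"

definition B :: "nat \<Rightarrow> tile set" where
  "B n = {((0,0,i+1),(1,1,1),(0,0,i),(1,1,int n)) | i. 0 \<le> i \<and> i \<le> int n - 1}"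

definition G :: "nat \<Rightarrow> tile set" where
  "G n = {((0,1,i+1),(1,1,1),(0,0,i),(1,1,int n+1)) | i. 0 \<le> i \<and> i \<le> int n}"

definition Y :: "nat \<Rightarrow> tile set" where
  "Y n = {((0,1,i+1),(1,1,2),(0,1,i),(1,1,int n+1)) | i. 1 \<le> i \<and> i \<le> int n}"

definition junction :: "nat \<Rightarrow> int \<Rightarrow> int \<Rightarrow> int \<Rightarrow> int \<Rightarrow> tile" where
  "junction n k l r s = ((0,k,l),(0,r,s),(0,s,r + int n),(0,l,k + int n))"

definition JP :: "(int \<times> int) set" where "JP = {(0,0),(0,1),(1,1)}"

definition J :: "nat \<Rightarrow> tile set" where
  "J n = {junction n k l r s | k l r s. (k,l) \<in> JP \<and> (r,s) \<in> JP}
         - {junction n 0 0 1 1, junction n 1 1 0 0}"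

definition tiles :: "nat \<Rightarrow> tile set" where
  "tiles n = W n \<union> B n \<union> G n \<union> Y n \<union> hat ` B n \<union> hat ` G n \<union> hat ` Y n \<union> J n"

definition valid :: "nat \<Rightarrow> (int \<times> int \<Rightarrow> tile) \<Rightarrow> bool" where
  "valid n x \<longleftrightarrow> (\<forall>m. x m \<in> tiles n) \<and>
     (\<forall>a b. RIGHT (x (a,b)) = LEFT (x (a+1,b)) \<and> TOP (x (a,b)) = BOTTOM (x (a,b+1)))"

definition Omega :: "nat \<Rightarrow> (int \<times> int \<Rightarrow> tile) set" where
  "Omega n = {x. valid n x}"

definition shift :: "int \<times> int \<Rightarrow> (int \<times> int \<Rightarrow> tile) \<Rightarrow> (int \<times> int \<Rightarrow> tile)" where
  "shift k x = (\<lambda>(a,b). x (a + fst k, b + snd k))"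

end

theory Submission
  imports Defs "HOL-Library.FuncSet" "HOL-Library.Infinite_Set"
begin

text \<open>Each tile gives its row and its column a type, the first letter of its horizontal and of its
  vertical labels, and the local rules make these types constant along rows and columns. In a
  valid configuration there are rows of type 0, and two consecutive ones are \<open>n\<close> or \<open>n + 1\<close>
  apart, because the third letters count along the run of type-1 rows between them; likewise for
  columns. The rows and columns of type 0 cut the plane into blocks, and the block sizes together
  with the second letters along the block sides form again a valid configuration (desubstitution),
  in which a row has type 1 exactly when the corresponding block height is \<open>n\<close>. Every period
  contains a row of type 1, so a row period \<open>k\<close> yields a row period \<open>K < k\<close> of the desubstituted
  configuration, and infinite descent excludes periods. Conversely, substituting for each tile a
  block of the corresponding shape turns valid rectangles into strictly larger ones; a compactness
  argument turns arbitrarily large valid squares into a valid configuration of the plane.\<close>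

type_synonym config = "int \<times> int \<Rightarrow> tile"

section \<open>Relaxed tiles and the local rule\<close>

definition v0 :: "label \<Rightarrow> int" where "v0 l = fst l"
definition v1 :: "label \<Rightarrow> int" where "v1 l = fst (snd l)"
definition v2 :: "label \<Rightarrow> int" where "v2 l = snd (snd l)"

lemma v_simps [simp]: "v0 (a,b,c) = a" "v1 (a,b,c) = b" "v2 (a,b,c) = c"
  by (simp_all add: v0_def v1_def v2_def)

text \<open>Desubstitution is only shown to preserve the following larger tile set (all four
  \<open>(f, f')\<close>-variants of the tiles of \<open>B\<close>, \<open>G\<close>, \<open>Y\<close> and all sixteen junction tiles),
  so aperiodicity is proved for it.\<close>

definition BGY_ext :: "nat \<Rightarrow> tile set" where
  "BGY_ext n = {((0,f',i+1),(1,1,1+f),(0,f,i),(1,1,int n+f')) | f f' i.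
      f \<in> {0,1} \<and> f' \<in> {0,1} \<and> 0 \<le> i \<and> i \<le> int n}"

definition J_ext :: "nat \<Rightarrow> tile set" where
  "J_ext n = {junction n k l r s | k l r s. k \<in> {0,1} \<and> l \<in> {0,1} \<and> r \<in> {0,1} \<and> s \<in> {0,1}}"

definition tiles_ext :: "nat \<Rightarrow> tile set" where
  "tiles_ext n = W n \<union> BGY_ext n \<union> hat ` BGY_ext n \<union> J_ext n"

definition valid_ext :: "nat \<Rightarrow> config \<Rightarrow> bool" where
  "valid_ext n x \<longleftrightarrow> (\<forall>m. x m \<in> tiles_ext n) \<and>
     (\<forall>a b. RIGHT (x (a,b)) = LEFT (x (a+1,b)) \<and> TOP (x (a,b)) = BOTTOM (x (a,b+1)))"

lemma tiles_subset_tiles_ext: "tiles n \<subseteq> tiles_ext n"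
proof -
  have BGY: "((0,f',i+1),(1,1,1+f),(0,f,i),(1,1,int n+f')) \<in> BGY_ext n"
    if "f \<in> {0,1}" "f' \<in> {0,1}" "0 \<le> i" "i \<le> int n" for f f' i
    using that unfolding BGY_ext_def by blast
  have "B n \<subseteq> BGY_ext n" unfolding B_def using BGY[of 0 0] by force
  moreover have "G n \<subseteq> BGY_ext n" unfolding G_def using BGY[of 0 1] by force
  moreover have "Y n \<subseteq> BGY_ext n" unfolding Y_def using BGY[of 1 1] by force
  moreover have "J n \<subseteq> J_ext n" unfolding J_def J_ext_def JP_def by blast
  ultimately show ?thesis unfolding tiles_def tiles_ext_def by blast
qed

lemma valid_imp_valid_ext: "valid n x \<Longrightarrow> valid_ext n x"
  using tiles_subset_tiles_ext unfolding valid_def valid_ext_def by blast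

text \<open>The four alternatives describe \<open>W\<close>, \<open>BGY_ext\<close>, \<open>hat ` BGY_ext\<close> and \<open>J_ext\<close>; which one
  applies is decided by the first letters of the left and bottom labels.\<close>

definition tile_rule :: "nat \<Rightarrow> label \<Rightarrow> label \<Rightarrow> label \<Rightarrow> label \<Rightarrow> bool" where
  "tile_rule n R T L Bo \<longleftrightarrow>
    (v0 L = 1 \<and> v0 Bo = 1 \<and> R = (1,1,v2 L + 1) \<and> T = (1,1,v2 Bo + 1) \<and> L = (1,1,v2 L) \<and> Bo = (1,1,v2 Bo)
       \<and> 1 \<le> v2 L \<and> v2 L \<le> int n \<and> 1 \<le> v2 Bo \<and> v2 Bo \<le> int n)
  \<or> (v0 L = 0 \<and> v0 Bo = 1 \<and> R = (0, v1 R, v2 L + 1) \<and> L = (0, v1 L, v2 L) \<and> T = (1,1,1 + v1 L)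
       \<and> Bo = (1,1,int n + v1 R) \<and> v1 L \<in> {0,1} \<and> v1 R \<in> {0,1} \<and> 0 \<le> v2 L \<and> v2 L \<le> int n)
  \<or> (v0 L = 1 \<and> v0 Bo = 0 \<and> T = (0, v1 T, v2 Bo + 1) \<and> Bo = (0, v1 Bo, v2 Bo) \<and> R = (1,1,1 + v1 Bo)
       \<and> L = (1,1,int n + v1 T) \<and> v1 Bo \<in> {0,1} \<and> v1 T \<in> {0,1} \<and> 0 \<le> v2 Bo \<and> v2 Bo \<le> int n)
  \<or> (v0 L = 0 \<and> v0 Bo = 0 \<and> R = (0, v1 R, v2 R) \<and> T = (0, v1 T, v2 T)
       \<and> L = (0, v2 T, v1 T + int n) \<and> Bo = (0, v2 R, v1 R + int n)
       \<and> v1 R \<in> {0,1} \<and> v2 R \<in> {0,1} \<and> v1 T \<in> {0,1} \<and> v2 T \<in> {0,1})"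

lemma tiles_ext_iff_tile_rule: "(R,T,L,Bo) \<in> tiles_ext n \<longleftrightarrow> tile_rule n R T L Bo"
proof
  assume "(R,T,L,Bo) \<in> tiles_ext n"
  then consider "(R,T,L,Bo) \<in> W n" | "(R,T,L,Bo) \<in> BGY_ext n" | "(R,T,L,Bo) \<in> hat ` BGY_ext n"
    | "(R,T,L,Bo) \<in> J_ext n"
    unfolding tiles_ext_def by blast
  then show "tile_rule n R T L Bo"
  proof cases
    case 1
    then show ?thesis unfolding W_def tile_rule_def by (intro disjI1) auto
  next
    case 2
    then show ?thesis unfolding BGY_ext_def tile_rule_def by (intro disjI2 disjI1) auto
  next
    case 3
    then show ?thesis unfolding BGY_ext_def tile_rule_def hat_def by (intro disjI2 disjI1) auto
  next
    case 4
    then show ?thesis unfolding J_ext_def junction_def tile_rule_def by (intro disjI2) auto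
  qed
next
  assume "tile_rule n R T L Bo"
  then show "(R,T,L,Bo) \<in> tiles_ext n"
    unfolding tile_rule_def
  proof (elim disjE conjE)
    assume "v0 L = 1" "v0 Bo = 1" "R = (1,1,v2 L + 1)" "T = (1,1,v2 Bo + 1)" "L = (1,1,v2 L)"
      "Bo = (1,1,v2 Bo)" "1 \<le> v2 L" "v2 L \<le> int n" "1 \<le> v2 Bo" "v2 Bo \<le> int n"
    then show ?thesis unfolding tiles_ext_def W_def by blast
  next
    assume "v0 L = 0" "v0 Bo = 1" "R = (0, v1 R, v2 L + 1)" "L = (0, v1 L, v2 L)" "T = (1,1,1 + v1 L)"
       "Bo = (1,1,int n + v1 R)" "v1 L \<in> {0,1}" "v1 R \<in> {0,1}" "0 \<le> v2 L" "v2 L \<le> int n"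
    then show ?thesis unfolding tiles_ext_def BGY_ext_def by blast
  next
    assume "v0 L = 1" "v0 Bo = 0" "T = (0, v1 T, v2 Bo + 1)" "Bo = (0, v1 Bo, v2 Bo)" "R = (1,1,1 + v1 Bo)"
       "L = (1,1,int n + v1 T)" "v1 Bo \<in> {0,1}" "v1 T \<in> {0,1}" "0 \<le> v2 Bo" "v2 Bo \<le> int n"
    then have "(T,R,Bo,L) \<in> BGY_ext n" unfolding BGY_ext_def by blast
    then have "hat (T,R,Bo,L) \<in> hat ` BGY_ext n" by blast
    then show ?thesis unfolding tiles_ext_def hat_def by simp
  next
    assume a: "v0 L = 0" "v0 Bo = 0" "R = (0, v1 R, v2 R)" "T = (0, v1 T, v2 T)"
       "L = (0, v2 T, v1 T + int n)" "Bo = (0, v2 R, v1 R + int n)"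
       "v1 R \<in> {0,1}" "v2 R \<in> {0,1}" "v1 T \<in> {0,1}" "v2 T \<in> {0,1}"
    then have "(R,T,L,Bo) = junction n (v1 R) (v2 R) (v1 T) (v2 T)" unfolding junction_def by simp
    with a show ?thesis unfolding tiles_ext_def J_ext_def by blast
  qed
qed

lemma tile_rule_swap: "tile_rule n R T L Bo \<Longrightarrow> tile_rule n T R Bo L"
  unfolding tile_rule_def by (elim disjE) simp_all

lemma hat_sides [simp]:
  "RIGHT (hat t) = TOP t" "TOP (hat t) = RIGHT t" "LEFT (hat t) = BOTTOM t" "BOTTOM (hat t) = LEFT t"
  by (cases t; simp add: hat_def RIGHT_def TOP_def LEFT_def BOTTOM_def)+

lemma hat_hat [simp]: "hat (hat t) = t"
  by (cases t) (simp add: hat_def)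

lemma tile_eq_sides: "t = (RIGHT t, TOP t, LEFT t, BOTTOM t)"
  by (cases t) (simp add: RIGHT_def TOP_def LEFT_def BOTTOM_def)

lemma tiles_ext_iff_tile_rule': "t \<in> tiles_ext n \<longleftrightarrow> tile_rule n (RIGHT t) (TOP t) (LEFT t) (BOTTOM t)"
  by (subst tile_eq_sides) (rule tiles_ext_iff_tile_rule)

lemma hat_in_tiles_ext: "t \<in> tiles_ext n \<Longrightarrow> hat t \<in> tiles_ext n"
  by (simp add: tiles_ext_iff_tile_rule' tile_rule_swap)

section \<open>Row and column types\<close>

definition hlab :: "config \<Rightarrow> int \<Rightarrow> int \<Rightarrow> label" where
  "hlab x a b = LEFT (x (a,b))"

definition vlab :: "config \<Rightarrow> int \<Rightarrow> int \<Rightarrow> label" where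
  "vlab x a b = BOTTOM (x (a,b))"

lemma valid_ext_tile_rule:
  assumes "valid_ext n x"
  shows "tile_rule n (hlab x (a+1) b) (vlab x a (b+1)) (hlab x a b) (vlab x a b)"
proof -
  have "x (a,b) \<in> tiles_ext n" "RIGHT (x (a,b)) = hlab x (a+1) b" "TOP (x (a,b)) = vlab x a (b+1)"
    using assms unfolding valid_ext_def hlab_def vlab_def by blast+
  then show ?thesis by (simp add: tiles_ext_iff_tile_rule' hlab_def vlab_def)
qed

lemma tile_rule_v0:
  "tile_rule n R T L Bo \<Longrightarrow> v0 R = v0 L \<and> v0 T = v0 Bo \<and> v0 L \<in> {0,1} \<and> v0 Bo \<in> {0,1}"
  by (cases R; cases T; cases L; cases Bo) (auto simp: tile_rule_def)

lemma tile_rule_W: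
  "tile_rule n R T L Bo \<Longrightarrow> v0 L = 1 \<Longrightarrow> v0 Bo = 1 \<Longrightarrow>
   v1 L = 1 \<and> v1 R = 1 \<and> v2 R = v2 L + 1 \<and> 1 \<le> v2 L \<and> v2 L \<le> int n \<and>
   v1 Bo = 1 \<and> v1 T = 1 \<and> v2 T = v2 Bo + 1 \<and> 1 \<le> v2 Bo \<and> v2 Bo \<le> int n"
  by (cases R; cases T; cases L; cases Bo) (auto simp: tile_rule_def)

lemma tile_rule_BGY:
  "tile_rule n R T L Bo \<Longrightarrow> v0 L = 0 \<Longrightarrow> v0 Bo = 1 \<Longrightarrow>
   v1 L \<in> {0,1} \<and> v1 R \<in> {0,1} \<and> v2 R = v2 L + 1 \<and> 0 \<le> v2 L \<and> v2 L \<le> int n \<and>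
   v1 T = 1 \<and> v2 T = 1 + v1 L \<and> v1 Bo = 1 \<and> v2 Bo = int n + v1 R"
  by (cases R; cases T; cases L; cases Bo) (auto simp: tile_rule_def)

lemma tile_rule_J:
  "tile_rule n R T L Bo \<Longrightarrow> v0 L = 0 \<Longrightarrow> v0 Bo = 0 \<Longrightarrow>
   v1 R \<in> {0,1} \<and> v2 R \<in> {0,1} \<and> v1 T \<in> {0,1} \<and> v2 T \<in> {0,1} \<and>
   v1 L = v2 T \<and> v2 L = v1 T + int n \<and> v1 Bo = v2 R \<and> v2 Bo = v1 R + int n"
  by (cases R; cases T; cases L; cases Bo) (auto simp: tile_rule_def)

definition row_type :: "config \<Rightarrow> int \<Rightarrow> int" where
  "row_type x b = v0 (hlab x 0 b)"

definition col_type :: "config \<Rightarrow> int \<Rightarrow> int" where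
  "col_type x a = v0 (vlab x a 0)"

lemma int_shift_invariant_const:
  fixes f :: "int \<Rightarrow> 'a"
  assumes "\<And>a. f (a+1) = f a"
  shows "f a = f 0"
proof (induct a rule: int_induct[where k=0])
  case (step1 i)
  then show ?case using assms[of i] by simp
next
  case (step2 i)
  then show ?case using assms[of "i - 1"] by simp
qed simp

lemma v0_hlab:
  assumes "valid_ext n x"
  shows "v0 (hlab x a b) = row_type x b"
proof -
  have "\<And>a. v0 (hlab x (a+1) b) = v0 (hlab x a b)"
    using tile_rule_v0[OF valid_ext_tile_rule[OF assms]] by blast
  then show ?thesis unfolding row_type_def by (rule int_shift_invariant_const)
qed

lemma v0_vlab:
  assumes "valid_ext n x"
  shows "v0 (vlab x a b) = col_type x a"
proof -
  have "\<And>b. v0 (vlab x a (b+1)) = v0 (vlab x a b)"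
    using tile_rule_v0[OF valid_ext_tile_rule[OF assms]] by blast
  then show ?thesis unfolding col_type_def by (rule int_shift_invariant_const)
qed

lemma row_type_01: "valid_ext n x \<Longrightarrow> row_type x b = 0 \<or> row_type x b = 1"
  using tile_rule_v0[OF valid_ext_tile_rule] v0_hlab by (metis insert_iff singletonD)

lemma col_type_01: "valid_ext n x \<Longrightarrow> col_type x a = 0 \<or> col_type x a = 1"
  using tile_rule_v0[OF valid_ext_tile_rule] v0_vlab by (metis insert_iff singletonD)

definition transposed :: "config \<Rightarrow> config" where
  "transposed x = (\<lambda>(a,b). hat (x (b,a)))"

lemma transposed_transposed [simp]: "transposed (transposed x) = x"
  unfolding transposed_def by (simp add: fun_eq_iff)

lemma hlab_transposed [simp]: "hlab (transposed x) a b = vlab x b a"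
  unfolding hlab_def vlab_def transposed_def by simp

lemma vlab_transposed [simp]: "vlab (transposed x) a b = hlab x b a"
  unfolding hlab_def vlab_def transposed_def by simp

lemma row_type_transposed [simp]: "row_type (transposed x) = col_type x"
  unfolding row_type_def col_type_def by (simp add: fun_eq_iff)

lemma col_type_transposed [simp]: "col_type (transposed x) = row_type x"
  unfolding row_type_def col_type_def by (simp add: fun_eq_iff)

lemma valid_ext_transposed: "valid_ext n x \<Longrightarrow> valid_ext n (transposed x)"
  unfolding valid_ext_def transposed_def by (auto simp: hat_in_tiles_ext)

lemma cell_W:
  assumes "valid_ext n x" "row_type x b = 1" "col_type x a = 1"
  shows "v1 (hlab x a b) = 1 \<and> v2 (hlab x (a+1) b) = v2 (hlab x a b) + 1 \<and>
    1 \<le> v2 (hlab x a b) \<and> v2 (hlab x a b) \<le> int n \<and>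
    v1 (vlab x a b) = 1 \<and> v2 (vlab x a (b+1)) = v2 (vlab x a b) + 1 \<and>
    1 \<le> v2 (vlab x a b) \<and> v2 (vlab x a b) \<le> int n"
  using tile_rule_W[OF valid_ext_tile_rule[OF assms(1)]] v0_hlab[OF assms(1)] v0_vlab[OF assms(1)] assms
  by metis

lemma cell_BGY:
  assumes "valid_ext n x" "row_type x b = 0" "col_type x a = 1"
  shows "v1 (hlab x a b) \<in> {0,1} \<and> v1 (hlab x (a+1) b) \<in> {0,1} \<and>
    v2 (hlab x (a+1) b) = v2 (hlab x a b) + 1 \<and> 0 \<le> v2 (hlab x a b) \<and> v2 (hlab x a b) \<le> int n \<and>
    v2 (vlab x a (b+1)) = 1 + v1 (hlab x a b) \<and> v2 (vlab x a b) = int n + v1 (hlab x (a+1) b)"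
  using tile_rule_BGY[OF valid_ext_tile_rule[OF assms(1)]] v0_hlab[OF assms(1)] v0_vlab[OF assms(1)] assms
  by metis

lemma cell_hat_BGY:
  assumes "valid_ext n x" "row_type x b = 1" "col_type x a = 0"
  shows "v1 (vlab x a b) \<in> {0,1} \<and> v1 (vlab x a (b+1)) \<in> {0,1} \<and>
    v2 (vlab x a (b+1)) = v2 (vlab x a b) + 1 \<and> 0 \<le> v2 (vlab x a b) \<and> v2 (vlab x a b) \<le> int n \<and>
    v2 (hlab x (a+1) b) = 1 + v1 (vlab x a b) \<and> v2 (hlab x a b) = int n + v1 (vlab x a (b+1))"
  using cell_BGY[OF valid_ext_transposed[OF assms(1)], of a b] assms by simp

lemma cell_J:
  assumes "valid_ext n x" "row_type x b = 0" "col_type x a = 0"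
  shows "v1 (hlab x (a+1) b) \<in> {0,1} \<and> v2 (hlab x (a+1) b) \<in> {0,1} \<and>
    v1 (vlab x a (b+1)) \<in> {0,1} \<and> v2 (vlab x a (b+1)) \<in> {0,1} \<and>
    v1 (hlab x a b) = v2 (vlab x a (b+1)) \<and> v2 (hlab x a b) = v1 (vlab x a (b+1)) + int n \<and>
    v1 (vlab x a b) = v2 (hlab x (a+1) b) \<and> v2 (vlab x a b) = v1 (hlab x (a+1) b) + int n"
  using tile_rule_J[OF valid_ext_tile_rule[OF assms(1)]] v0_hlab[OF assms(1)] v0_vlab[OF assms(1)] assms
  by metis

lemma v1_vlab_01:
  assumes hx: "valid_ext n x" and a: "col_type x a = 0"
  shows "v1 (vlab x a b) = 0 \<or> v1 (vlab x a b) = 1"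
  using row_type_01[OF hx, of b] cell_J[OF hx _ a, of b] cell_hat_BGY[OF hx _ a, of b] by auto

lemma v1_hlab_01:
  "valid_ext n x \<Longrightarrow> row_type x b = 0 \<Longrightarrow> v1 (hlab x a b) = 0 \<or> v1 (hlab x a b) = 1"
  using v1_vlab_01[OF valid_ext_transposed, of n x b a] by simp

section \<open>Spacing of the rows of type 0\<close>

lemma vlab_v2_step: "valid_ext n x \<Longrightarrow> row_type x b = 1 \<Longrightarrow> v2 (vlab x a (b+1)) = v2 (vlab x a b) + 1"
  using cell_W cell_hat_BGY col_type_01 by metis

lemma vlab_v2_bounds: "valid_ext n x \<Longrightarrow> row_type x b = 1 \<Longrightarrow> 0 \<le> v2 (vlab x a b) \<and> v2 (vlab x a b) \<le> int n"
  using cell_W cell_hat_BGY col_type_01 by (metis dual_order.trans zero_le_one)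

lemma hlab_v2_bounds: "valid_ext n x \<Longrightarrow> col_type x a = 1 \<Longrightarrow> 0 \<le> v2 (hlab x a b) \<and> v2 (hlab x a b) \<le> int n"
  using cell_W cell_BGY row_type_01 by (metis dual_order.trans zero_le_one)

lemma vlab_v2_run:
  assumes hx: "valid_ext n x" and ones: "\<And>e. 0 \<le> e \<Longrightarrow> e < int m \<Longrightarrow> row_type x (b + e) = 1"
  shows "v2 (vlab x a (b + int m)) = v2 (vlab x a b) + int m"
  using ones
proof (induct m)
  case (Suc m)
  then have "row_type x (b + int m) = 1" by simp
  then have "v2 (vlab x a (b + int m + 1)) = v2 (vlab x a (b + int m)) + 1" using vlab_v2_step[OF hx] by blast
  with Suc show ?case by (simp add: algebra_simps)
qed simp

lemma hlab_v2_run: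
  assumes "valid_ext n x" and "\<And>e. 0 \<le> e \<Longrightarrow> e < int m \<Longrightarrow> col_type x (a + e) = 1"
  shows "v2 (hlab x (a + int m) b) = v2 (hlab x a b) + int m"
  using vlab_v2_run[OF valid_ext_transposed[OF assms(1)], of m a b] assms(2) by simp

lemma ex_row_type_0:
  assumes hx: "valid_ext n x"
  shows "\<exists>b. row_type x b = 0"
proof (rule ccontr)
  assume "\<not> ?thesis"
  then have ones: "\<And>b. row_type x b = 1" using row_type_01[OF hx] by metis
  have "v2 (vlab x 0 (0 + int (n+1))) = v2 (vlab x 0 0) + int (n+1)"
    by (rule vlab_v2_run[OF hx]) (simp add: ones)
  moreover have "0 \<le> v2 (vlab x 0 0)" "v2 (vlab x 0 (int (n+1))) \<le> int n"
    using vlab_v2_bounds[OF hx ones] by blast+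
  ultimately show False by simp
qed

lemma ex_col_type_0: "valid_ext n x \<Longrightarrow> \<exists>a. col_type x a = 0"
  using ex_row_type_0[OF valid_ext_transposed] by simp

lemma no_long_type_1_column_run:
  assumes hx: "valid_ext n x" and b: "row_type x b = 0"
    and ones: "\<And>e. 0 \<le> e \<Longrightarrow> e \<le> int n + 1 \<Longrightarrow> col_type x (a + e) = 1"
  shows False
proof -
  have "v2 (hlab x (a + int (n+1)) b) = v2 (hlab x a b) + int (n+1)"
    by (rule hlab_v2_run[OF hx]) (simp add: ones)
  moreover have "0 \<le> v2 (hlab x a b)" "v2 (hlab x (a + int (n+1)) b) \<le> int n"
    using hlab_v2_bounds[OF hx ones[of 0]] hlab_v2_bounds[OF hx ones[of "int n + 1"]] by (simp_all add: add.commute)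
  ultimately show False by simp
qed

context
  fixes n :: nat and x
  assumes hx: "valid_ext n x" and n: "n \<ge> 1" and rows: "\<And>b. row_type x b = 0"
begin

lemma junction_column_if_no_type_1_row:
  assumes a: "col_type x a = 0"
  shows "n = 1 \<and> v1 (hlab x (a+1) b) = 0 \<and> v1 (hlab x a b) = 1"
proof -
  have "v2 (vlab x a (b+1)) \<in> {0,1}" "v1 (hlab x a b) = v2 (vlab x a (b+1))"
    "v2 (vlab x a b) = v1 (hlab x (a+1) b) + int n" "v1 (hlab x (a+1) b) \<in> {0,1}"
    using cell_J[OF hx rows a, of b] by auto
  moreover have "v2 (vlab x a (b+1)) = v1 (hlab x (a+1) (b+1)) + int n" "v1 (hlab x (a+1) (b+1)) \<in> {0,1}"
    using cell_J[OF hx rows a, of "b+1"] by auto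
  moreover have "v2 (vlab x a b) \<in> {0,1}"
    using cell_J[OF hx rows a, of "b-1"] by auto
  ultimately show ?thesis using n by auto
qed

lemma type_1_column_if_no_type_1_row:
  assumes "col_type x a = 1"
  shows "1 + v1 (hlab x a b) = int n + v1 (hlab x (a+1) (b+1)) \<and>
    v1 (hlab x a b) \<in> {0,1} \<and> v1 (hlab x (a+1) (b+1)) \<in> {0,1}"
  using cell_BGY[OF hx rows assms, of b] cell_BGY[OF hx rows assms, of "b+1"] by auto

text \<open>For \<open>n = 1\<close> the second letter of the horizontal labels propagates diagonally through
  columns of type 1 and drops from 1 to 0 across a junction column, so right of a junction
  column there is no further one.\<close>

lemma type_1_columns_right_of_junction:
  assumes "n = 1" and c: "col_type x c = 0"
  shows "col_type x (c + 1 + int e) = 1"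
proof -
  have "v1 (hlab x (c + 1 + int e) b) = 0" for b
  proof (induction e arbitrary: b)
    case 0
    show ?case using junction_column_if_no_type_1_row[OF c] by simp
  next
    case (Suc e)
    have "col_type x (c + 1 + int e) = 1"
      using junction_column_if_no_type_1_row Suc.IH col_type_01[OF hx] by force
    then have "1 + v1 (hlab x (c + 1 + int e) (b-1)) = int n + v1 (hlab x (c + 1 + int e + 1) b)"
      using type_1_column_if_no_type_1_row[of "c + 1 + int e" "b-1"] by simp
    then show ?case using Suc.IH[of "b-1"] \<open>n = 1\<close> by (simp add: algebra_simps)
  qed
  then show ?thesis using junction_column_if_no_type_1_row col_type_01[OF hx] by force
qed

end

lemma ex_row_type_1:
  assumes hx: "valid_ext n x" and n: "n \<ge> 1"
  shows "\<exists>b. row_type x b = 1"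
proof (rule ccontr)
  assume "\<not> ?thesis"
  then have rows: "\<And>b. row_type x b = 0" using row_type_01[OF hx] by metis
  show False
  proof (cases "n = 1")
    case True
    obtain c where "col_type x c = 0"
      using no_long_type_1_column_run[OF hx rows[of 0], of 0] col_type_01[OF hx] by force
    then have "col_type x (c + 1 + e) = 1" if "0 \<le> e" for e
      using type_1_columns_right_of_junction[OF hx n rows True, of c "nat e"] that by simp
    then show False using no_long_type_1_column_run[OF hx rows[of 0], of "c+1"] by (simp add: add.assoc)
  next
    case False
    then have cols: "col_type x a = 1" for a
      using junction_column_if_no_type_1_row[OF hx n rows] col_type_01[OF hx] by force
    show False
      using type_1_column_if_no_type_1_row[OF hx n rows cols, of 0 0]
        type_1_column_if_no_type_1_row[OF hx n rows cols, of 1 1] False n by auto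
  qed
qed

lemma ex_col_type_1: "valid_ext n x \<Longrightarrow> n \<ge> 1 \<Longrightarrow> \<exists>a. col_type x a = 1"
  using ex_row_type_1[OF valid_ext_transposed] by simp

definition gap_above :: "config \<Rightarrow> int \<Rightarrow> nat" where
  "gap_above x b = (LEAST d::nat. 0 < d \<and> row_type x (b + int d) = 0)"

definition gap_below :: "config \<Rightarrow> int \<Rightarrow> nat" where
  "gap_below x b = (LEAST d::nat. 0 < d \<and> row_type x (b - int d) = 0)"

definition next_zero :: "config \<Rightarrow> int \<Rightarrow> int" where
  "next_zero x b = b + int (gap_above x b)"

definition prev_zero :: "config \<Rightarrow> int \<Rightarrow> int" where
  "prev_zero x b = b - int (gap_below x b)"

definition zero_row :: "config \<Rightarrow> int \<Rightarrow> int" where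
  "zero_row x q = (let b = (SOME b. row_type x b = 0) in
     if 0 \<le> q then (next_zero x ^^ nat q) b else (prev_zero x ^^ nat (-q)) b)"

context
  fixes n :: nat and x
  assumes hx: "valid_ext n x" and n: "n \<ge> 1"
begin

lemma no_long_type_1_row_run:
  assumes ones: "\<And>e. 0 \<le> e \<Longrightarrow> e \<le> int n \<Longrightarrow> row_type x (b + e) = 1"
  shows False
proof -
  obtain a where a: "col_type x a = 1" using ex_col_type_1[OF hx n] by blast
  have "v2 (vlab x a (b + int n)) = v2 (vlab x a b) + int n"
    by (rule vlab_v2_run[OF hx]) (simp add: ones)
  moreover have "1 \<le> v2 (vlab x a b)" "v2 (vlab x a (b + int n)) \<le> int n"
    using cell_W[OF hx ones[of 0] a] cell_W[OF hx ones[of "int n"] a] by simp_all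
  ultimately show False by simp
qed

lemma row_type_0_ahead: "\<exists>e. 1 \<le> e \<and> e \<le> int n + 1 \<and> row_type x (b + e) = 0"
proof (rule ccontr)
  assume none: "\<not> ?thesis"
  have "row_type x (b + 1 + e) = 1" if "0 \<le> e" "e \<le> int n" for e
  proof -
    have "row_type x (b + (e+1)) = 1" using none row_type_01[OF hx, of "b + (e+1)"] that by auto
    then show ?thesis by (simp add: ac_simps)
  qed
  then show False by (rule no_long_type_1_row_run)
qed

text \<open>Through the run of type-1 rows the third letters of the vertical labels grow by \<open>d - 1\<close>; the
  two bounding rows of type 0 pin them to \<open>{1,2}\<close> below and \<open>{n,n+1}\<close> above in a column of
  type 1, and to \<open>{0,1}\<close> below and \<open>{n,n+1}\<close> above in a column of type 0.\<close>

lemma row_gap_values: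
  assumes b: "row_type x b = 0" and d: "d \<ge> 1" and bd: "row_type x (b + int d) = 0"
    and ones: "\<And>e. 0 < e \<Longrightarrow> e < int d \<Longrightarrow> row_type x (b + e) = 1"
  shows "d = n \<or> d = n + 1"
proof -
  obtain a1 where a1: "col_type x a1 = 1" using ex_col_type_1[OF hx n] by blast
  obtain a0 where a0: "col_type x a0 = 0" using ex_col_type_0[OF hx] by blast
  have "row_type x (b + 1 + e) = 1" if "0 \<le> e" "e < int (d - 1)" for e
    using ones[of "1 + e"] that d by (simp add: of_nat_diff add.assoc)
  then have run: "v2 (vlab x a (b + int d)) = v2 (vlab x a (b+1)) + int (d - 1)" for a
    using vlab_v2_run[OF hx, of "d - 1" "b+1" a] d by (simp add: of_nat_diff)
  have "v2 (vlab x a1 (b+1)) = 1 + v1 (hlab x a1 b)" "v1 (hlab x a1 b) \<in> {0,1}"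
    "v2 (vlab x a1 (b + int d)) = int n + v1 (hlab x (a1+1) (b + int d))"
    "v1 (hlab x (a1+1) (b + int d)) \<in> {0,1}"
    using cell_BGY[OF hx b a1] cell_BGY[OF hx bd a1] by auto
  moreover have "v2 (vlab x a0 (b+1)) \<in> {0,1}"
    "v2 (vlab x a0 (b + int d)) = v1 (hlab x (a0+1) (b + int d)) + int n"
    "v1 (hlab x (a0+1) (b + int d)) \<in> {0,1}"
    using cell_J[OF hx b a0] cell_J[OF hx bd a0] by auto
  ultimately show ?thesis using run[of a0] run[of a1] d by auto
qed

lemma gap_above:
  "0 < gap_above x b \<and> row_type x (b + int (gap_above x b)) = 0 \<and>
   (\<forall>e. 0 < e \<and> e < int (gap_above x b) \<longrightarrow> row_type x (b + e) = 1)"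
proof -
  obtain e where "1 \<le> e" "row_type x (b + e) = 0" using row_type_0_ahead by blast
  then have "0 < nat e \<and> row_type x (b + int (nat e)) = 0" by simp
  then have "0 < gap_above x b \<and> row_type x (b + int (gap_above x b)) = 0"
    unfolding gap_above_def by (rule LeastI)
  moreover have "row_type x (b + e) = 1" if "0 < e" "e < int (gap_above x b)" for e
  proof -
    have "\<not> (0 < nat e \<and> row_type x (b + int (nat e)) = 0)"
      using not_less_Least[of "nat e" "\<lambda>d. 0 < d \<and> row_type x (b + int d) = 0"] that
      unfolding gap_above_def by linarith
    then show ?thesis using that row_type_01[OF hx] by auto
  qed
  ultimately show ?thesis by blast
qed

lemma gap_below:
  "0 < gap_below x b \<and> row_type x (b - int (gap_below x b)) = 0 \<and>
   (\<forall>e. 0 < e \<and> e < int (gap_below x b) \<longrightarrow> row_type x (b - e) = 1)"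
proof -
  obtain e where e: "1 \<le> e" "e \<le> int n + 1" "row_type x ((b - int n - 2) + e) = 0"
    using row_type_0_ahead by blast
  then have "0 < nat (int n + 2 - e) \<and> row_type x (b - int (nat (int n + 2 - e))) = 0"
    by (simp add: algebra_simps)
  then have "0 < gap_below x b \<and> row_type x (b - int (gap_below x b)) = 0"
    unfolding gap_below_def by (rule LeastI)
  moreover have "row_type x (b - e) = 1" if "0 < e" "e < int (gap_below x b)" for e
  proof -
    have "\<not> (0 < nat e \<and> row_type x (b - int (nat e)) = 0)"
      using not_less_Least[of "nat e" "\<lambda>d. 0 < d \<and> row_type x (b - int d) = 0"] that
      unfolding gap_below_def by linarith
    then show ?thesis using that row_type_01[OF hx] by auto
  qed
  ultimately show ?thesis by blast
qed

lemma gap_above_values: "row_type x b = 0 \<Longrightarrow> gap_above x b = n \<or> gap_above x b = n + 1"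
  using row_gap_values[of b "gap_above x b"] gap_above[of b] by auto

lemma gap_above_le: "0 < d \<Longrightarrow> row_type x (b + int d) = 0 \<Longrightarrow> gap_above x b \<le> d"
  unfolding gap_above_def by (rule Least_le) simp

lemma gap_below_le: "0 < d \<Longrightarrow> row_type x (b - int d) = 0 \<Longrightarrow> gap_below x b \<le> d"
  unfolding gap_below_def by (rule Least_le) simp

lemma row_type_next_zero: "row_type x (next_zero x b) = 0"
  using gap_above unfolding next_zero_def by blast

lemma row_type_prev_zero: "row_type x (prev_zero x b) = 0"
  using gap_below unfolding prev_zero_def by blast

lemma prev_next_zero:
  assumes b: "row_type x b = 0"
  shows "prev_zero x (next_zero x b) = b"
proof -
  let ?d = "gap_above x b" and ?d' = "gap_below x (next_zero x b)"
  have "?d' \<le> ?d" using gap_below_le[of ?d] gap_above[of b] b unfolding next_zero_def by simp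
  moreover have "\<not> ?d' < ?d"
  proof
    assume "?d' < ?d"
    then have "row_type x (b + (int ?d - int ?d')) = 1" using gap_above[of b] gap_below[of "next_zero x b"] by simp
    then show False using gap_below[of "next_zero x b"] unfolding next_zero_def by (simp add: algebra_simps)
  qed
  ultimately show ?thesis unfolding prev_zero_def next_zero_def by simp
qed

lemma next_prev_zero:
  assumes b: "row_type x b = 0"
  shows "next_zero x (prev_zero x b) = b"
proof -
  let ?d = "gap_below x b" and ?d' = "gap_above x (prev_zero x b)"
  have "?d' \<le> ?d" using gap_above_le[of ?d] gap_below[of b] b unfolding prev_zero_def by simp
  moreover have "\<not> ?d' < ?d"
  proof
    assume "?d' < ?d"
    then have "row_type x (b - (int ?d - int ?d')) = 1" using gap_below[of b] gap_above[of "prev_zero x b"] by simp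
    then show False using gap_above[of "prev_zero x b"] unfolding prev_zero_def by (simp add: algebra_simps)
  qed
  ultimately show ?thesis unfolding prev_zero_def next_zero_def by simp
qed

lemma row_type_zero_row: "row_type x (zero_row x q) = 0"
proof -
  have b: "row_type x (SOME b. row_type x b = 0) = 0" using ex_row_type_0[OF hx] by (rule someI_ex)
  have "row_type x ((next_zero x ^^ k) (SOME b. row_type x b = 0)) = 0"
    "row_type x ((prev_zero x ^^ k) (SOME b. row_type x b = 0)) = 0" for k
    by (induct k) (simp_all add: b row_type_next_zero row_type_prev_zero)
  then show ?thesis unfolding zero_row_def Let_def by simp
qed

lemma zero_row_succ: "zero_row x (q+1) = next_zero x (zero_row x q)"
proof (cases "0 \<le> q")
  case True
  then have "nat (q+1) = Suc (nat q)" by simp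
  with True show ?thesis unfolding zero_row_def Let_def by simp
next
  case False
  have "zero_row x q = prev_zero x (zero_row x (q+1))"
  proof (cases "q = -1")
    case False
    then have "nat (-q) = Suc (nat (-(q+1)))" using \<open>\<not> 0 \<le> q\<close> by simp
    then show ?thesis using \<open>\<not> 0 \<le> q\<close> False unfolding zero_row_def Let_def by simp
  qed (simp add: zero_row_def)
  then show ?thesis using next_prev_zero row_type_zero_row by simp
qed

lemma zero_row_pred: "zero_row x (q-1) = prev_zero x (zero_row x q)"
  using zero_row_succ[of "q-1"] prev_next_zero[OF row_type_zero_row[of "q-1"]] by simp

lemma zero_row_gap: "zero_row x (q+1) - zero_row x q = int n \<or> zero_row x (q+1) - zero_row x q = int n + 1"
  using gap_above_values[OF row_type_zero_row[of q]] zero_row_succ[of q] unfolding next_zero_def by auto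

lemma row_type_between_zero_rows:
  assumes "zero_row x q < b" "b < zero_row x (q+1)"
  shows "row_type x b = 1"
proof -
  have "0 < b - zero_row x q \<and> b - zero_row x q < int (gap_above x (zero_row x q))"
    using assms zero_row_succ[of q] unfolding next_zero_def by linarith
  then have "row_type x (zero_row x q + (b - zero_row x q)) = 1" using gap_above by blast
  then show ?thesis by simp
qed

lemma zero_row_add_ge: "zero_row x q + int k \<le> zero_row x (q + int k)"
proof (induct k)
  case (Suc k)
  have "zero_row x (q + int k) + 1 \<le> zero_row x (q + int k + 1)" using zero_row_gap[of "q + int k"] n by auto
  with Suc show ?case by (simp add: algebra_simps)
qed simp

lemma zero_row_less: "q < q' \<Longrightarrow> zero_row x q < zero_row x q'"
  using zero_row_add_ge[of "q + 1" "nat (q' - q - 1)"] zero_row_add_ge[of q 1] by simp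

lemma zero_row_le: "q \<le> q' \<Longrightarrow> zero_row x q \<le> zero_row x q'"
  using zero_row_less[of q q'] by (cases "q = q'") auto

lemma zero_row_surj_above: "row_type x b = 0 \<Longrightarrow> zero_row x 0 \<le> b \<Longrightarrow> \<exists>q\<ge>0. zero_row x q = b"
proof (induct "nat (b - zero_row x 0)" arbitrary: b rule: less_induct)
  case less
  show ?case
  proof (cases "b = zero_row x 0")
    case False
    then have lt: "zero_row x 0 < b" using less.prems by simp
    have "gap_below x b \<le> nat (b - zero_row x 0)"
      using gap_below_le[of "nat (b - zero_row x 0)" b] lt row_type_zero_row[of 0] by simp
    then have "zero_row x 0 \<le> prev_zero x b" unfolding prev_zero_def using lt by linarith
    moreover have "prev_zero x b < b" using gap_below[of b] unfolding prev_zero_def by simp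
    ultimately obtain q where q: "q \<ge> 0" "zero_row x q = prev_zero x b"
      using less.hyps[of "prev_zero x b"] row_type_prev_zero by fastforce
    then have "zero_row x (q+1) = b" using zero_row_succ[of q] next_prev_zero[OF less.prems(1)] by simp
    with q show ?thesis by (intro exI[of _ "q+1"]) simp
  qed auto
qed

context
  fixes k :: int
  assumes k: "k > 0" and period: "\<And>b. row_type x (b + k) = row_type x b"
begin

lemma row_type_period_mult: "row_type x (b + m * k) = row_type x b"
proof (induct m rule: int_induct[where k=0])
  case (step1 i)
  then show ?case using period[of "b + i * k"] by (simp add: algebra_simps)
next
  case (step2 i)
  then show ?case using period[of "b + (i - 1) * k"] by (simp add: algebra_simps)
qed simp

lemma next_zero_period: "next_zero x (b + k) = next_zero x b + k"
proof -
  have "row_type x (b + k + d) = row_type x (b + d)" for d using period[of "b + d"] by (simp add: ac_simps)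
  then show ?thesis unfolding next_zero_def gap_above_def by simp
qed

lemma prev_zero_period: "prev_zero x (b + k) = prev_zero x b + k"
proof -
  have "row_type x (b + k - d) = row_type x (b - d)" for d using period[of "b - d"] by (simp add: algebra_simps)
  then show ?thesis unfolding prev_zero_def gap_below_def by simp
qed

text \<open>A period contains a row of type 1, so fewer than \<open>k\<close> rows of type 0.\<close>

lemma zero_row_count_less:
  assumes K: "0 < K" "zero_row x K = zero_row x 0 + k"
  shows "K < k"
proof -
  obtain b1 where b1: "row_type x b1 = 1" using ex_row_type_1[OF hx n] by blast
  define b where "b = zero_row x 0 + (b1 - zero_row x 0) mod k"
  have "b1 = b + ((b1 - zero_row x 0) div k) * k" unfolding b_def by (simp add: algebra_simps)
  then have "row_type x b = 1" using row_type_period_mult[of b "(b1 - zero_row x 0) div k"] b1 by simp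
  then have "zero_row x ` {0..<K} \<subseteq> {zero_row x 0..<zero_row x 0 + k} - {b}"
    using zero_row_le[of 0] zero_row_less[of _ K] row_type_zero_row K by fastforce
  moreover have "b \<in> {zero_row x 0..<zero_row x 0 + k}" unfolding b_def using k by simp
  moreover have "inj_on (zero_row x) {0..<K}"
    by (rule inj_onI) (metis linorder_neqE zero_row_less less_irrefl)
  ultimately have "card {0..<K} \<le> card ({zero_row x 0..<zero_row x 0 + k} - {b})"
    by (metis card_image card_mono finite_Diff finite_atLeastLessThan_int)
  then show ?thesis using k K(1) \<open>b \<in> _\<close> by simp
qed

lemma zero_row_period: "\<exists>K. 0 < K \<and> K < k \<and> (\<forall>q. zero_row x (q + K) = zero_row x q + k)"
proof -
  have "row_type x (zero_row x 0 + k) = 0" using period row_type_zero_row by simp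
  then have "\<exists>K\<ge>0. zero_row x K = zero_row x 0 + k" by (rule zero_row_surj_above) (use k in simp)
  then obtain K where K: "K \<ge> 0" "zero_row x K = zero_row x 0 + k" by blast
  then have "K \<noteq> 0" using k by auto
  have "zero_row x (q + K) = zero_row x q + k" for q
  proof (induct q rule: int_induct[where k=0])
    case (step1 i)
    have "zero_row x (i + 1 + K) = next_zero x (zero_row x (i + K))"
      using zero_row_succ[of "i + K"] by (simp add: ac_simps)
    with step1 show ?case by (simp add: next_zero_period zero_row_succ)
  next
    case (step2 i)
    have "zero_row x (i - 1 + K) = prev_zero x (zero_row x (i + K))"
      using zero_row_pred[of "i + K"] by (simp add: algebra_simps)
    with step2 show ?case by (simp add: prev_zero_period zero_row_pred)
  qed (use K in simp)
  with K \<open>K \<noteq> 0\<close> zero_row_count_less show ?thesis by (metis order_le_less)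
qed

end

end

section \<open>Desubstitution and aperiodicity\<close>

definition block :: "config \<Rightarrow> int \<Rightarrow> int \<Rightarrow> int \<Rightarrow> int \<Rightarrow> bool" where
  "block x c c' r r' \<longleftrightarrow>
     col_type x c = 0 \<and> col_type x c' = 0 \<and> c < c' \<and> (\<forall>a. c < a \<and> a < c' \<longrightarrow> col_type x a = 1) \<and>
     row_type x r = 0 \<and> row_type x r' = 0 \<and> r < r' \<and> (\<forall>b. r < b \<and> b < r' \<longrightarrow> row_type x b = 1)"

lemma block_transposed_iff [simp]: "block (transposed x) r r' c c' = block x c c' r r'"
  unfolding block_def by auto

lemma block_diagonal:
  assumes hx: "valid_ext n x" and blk: "block x c c' r r'"
  shows "v1 (vlab x c' (b+1)) = v1 (vlab x c b) + (c' - c) - int n - 1 + row_type x b"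
proof -
  have c: "col_type x c = 0" "col_type x c' = 0" using blk unfolding block_def by auto
  have "v2 (hlab x (c + 1 + int (nat (c' - c - 1))) b) = v2 (hlab x (c+1) b) + int (nat (c' - c - 1))"
    by (rule hlab_v2_run[OF hx]) (use blk in \<open>auto simp: block_def\<close>)
  then have "v2 (hlab x c' b) = v2 (hlab x (c+1) b) + (c' - c - 1)" using blk unfolding block_def by simp
  then show ?thesis
    using row_type_01[OF hx, of b] cell_J[OF hx _ c(1)] cell_J[OF hx _ c(2)]
      cell_hat_BGY[OF hx _ c(1)] cell_hat_BGY[OF hx _ c(2)] by auto
qed

definition zero_count :: "config \<Rightarrow> int \<Rightarrow> int \<Rightarrow> int \<Rightarrow> int" where
  "zero_count x c r r' = (\<Sum>m<nat (r' - r). 1 - v1 (vlab x c (r + 1 + int m)))"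

lemma zero_count_split:
  assumes "r < r'"
  shows "zero_count x c r r' = (\<Sum>m<nat (r' - r - 1). 1 - v1 (vlab x c (r + 1 + int m))) + (1 - v1 (vlab x c r'))"
    and "zero_count x c r r' = (1 - v1 (vlab x c (r + 1))) + (\<Sum>m<nat (r' - r - 1). 1 - v1 (vlab x c (r + 2 + int m)))"
proof -
  have N: "nat (r' - r) = Suc (nat (r' - r - 1))" using assms by simp
  show "zero_count x c r r' = (\<Sum>m<nat (r' - r - 1). 1 - v1 (vlab x c (r + 1 + int m))) + (1 - v1 (vlab x c r'))"
    unfolding zero_count_def N using assms by simp
  show "zero_count x c r r' = (1 - v1 (vlab x c (r + 1))) + (\<Sum>m<nat (r' - r - 1). 1 - v1 (vlab x c (r + 2 + int m)))"
    unfolding zero_count_def N sum.lessThan_Suc_shift by (simp add: algebra_simps)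
qed

context
  fixes n :: nat and x and c c' r r'
  assumes hx: "valid_ext n x" and blk: "block x c c' r r'"
begin

lemma v1_block_columns_01: "v1 (vlab x c b) \<in> {0,1}" "v1 (vlab x c' b) \<in> {0,1}"
  using v1_vlab_01[OF hx] blk unfolding block_def by auto

lemma zero_count_narrow:
  assumes w: "c' - c = int n"
  shows "zero_count x c' r r' = zero_count x c r r' + 1 \<and> 0 \<le> zero_count x c r r' \<and> zero_count x c r r' \<le> r' - r - 1"
proof -
  have r: "r < r'" "row_type x r = 0" "row_type x r' = 0" and mid: "\<And>b. r < b \<Longrightarrow> b < r' \<Longrightarrow> row_type x b = 1"
    using blk unfolding block_def by auto
  note diag = block_diagonal[OF hx blk] and v01 = v1_block_columns_01
  let ?S = "\<Sum>m<nat (r' - r - 1). 1 - v1 (vlab x c (r + 1 + int m))"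
  have "v1 (vlab x c' (r + 2 + int m)) = v1 (vlab x c (r + 1 + int m))" if "m < nat (r' - r - 1)" for m
    using diag[of "r + 1 + int m"] mid[of "r + 1 + int m"] w that by (simp add: algebra_simps)
  then have shifted: "(\<Sum>m<nat (r' - r - 1). 1 - v1 (vlab x c' (r + 2 + int m))) = ?S" by simp
  have "v1 (vlab x c' (r+1)) = 0" "v1 (vlab x c r') = 1"
    using diag[of r] diag[of r'] r w v01[of r] v01[of "r+1"] v01[of r'] v01[of "r'+1"] by auto
  moreover have "0 \<le> 1 - v1 (vlab x c b) \<and> 1 - v1 (vlab x c b) \<le> 1" for b using v01(1)[of b] by auto
  then have "0 \<le> ?S \<and> ?S \<le> (\<Sum>m<nat (r' - r - 1). (1::int))"
    by (intro conjI sum_nonneg sum_mono) auto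
  ultimately show ?thesis using zero_count_split[OF r(1), of x c] zero_count_split[OF r(1), of x c'] shifted r(1)
    by simp
qed

lemma zero_count_wide:
  assumes w: "c' - c = int n + 1"
  shows "zero_count x c r r' = (r' - r) - v1 (vlab x c r') \<and> zero_count x c' r r' = 1 - v1 (vlab x c r)"
proof -
  have r: "r < r'" "row_type x r = 0" and mid: "\<And>b. r < b \<Longrightarrow> b < r' \<Longrightarrow> row_type x b = 1"
    using blk unfolding block_def by auto
  note diag = block_diagonal[OF hx blk] and v01 = v1_block_columns_01
  have "v1 (vlab x c (r + 1 + int m)) = 0 \<and> v1 (vlab x c' (r + 2 + int m)) = 1" if "m < nat (r' - r - 1)" for m
    using diag[of "r + 1 + int m"] mid[of "r + 1 + int m"] w that
      v01[of "r + 1 + int m"] v01[of "r + 2 + int m"] by (auto simp: algebra_simps)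
  then have "(\<Sum>m<nat (r' - r - 1). 1 - v1 (vlab x c (r + 1 + int m))) = (\<Sum>m<nat (r' - r - 1). 1)"
    "(\<Sum>m<nat (r' - r - 1). 1 - v1 (vlab x c' (r + 2 + int m))) = 0" by simp_all
  moreover have "v1 (vlab x c' (r+1)) = v1 (vlab x c r)" using diag[of r] r w by simp
  ultimately show ?thesis using zero_count_split[OF r(1), of x c] zero_count_split[OF r(1), of x c'] r(1)
    by simp
qed

end

text \<open>The label that the desubstituted tile of a block carries on the side lying on column \<open>c\<close>:
  its first letter records whether the block height \<open>r' - r\<close> is \<open>n\<close> or \<open>n + 1\<close>, and its counter
  is the number of zeros among the second letters of the vertical labels of the column.\<close>

definition block_label :: "nat \<Rightarrow> config \<Rightarrow> int \<Rightarrow> int \<Rightarrow> int \<Rightarrow> label" where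
  "block_label n x c r r' =
     (if r' - r = int n then (1, 1, zero_count x c r r' + 1) else (0, 1 - v1 (hlab x c r), zero_count x c r r'))"

context
  fixes n :: nat and x and c c' r r'
  assumes hx: "valid_ext n x" and n: "n \<ge> 1" and blk: "block x c c' r r'"
begin

lemma block_transposed: "block (transposed x) r r' c c'"
  using blk by simp

lemma v1_block_corners_01:
  "1 - v1 (hlab x c r) \<in> {0,1}" "1 - v1 (hlab x c' r) \<in> {0,1}"
  "1 - v1 (vlab x c r) \<in> {0,1}" "1 - v1 (vlab x c r') \<in> {0,1}"
  using v1_hlab_01[OF hx, of r] v1_vlab_01[OF hx, of c] blk unfolding block_def by auto

lemma block_tile_rule_W:
  assumes "c' - c = int n" "r' - r = int n"
  shows "tile_rule n (block_label n x c' r r') (block_label n (transposed x) r' c c')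
    (block_label n x c r r') (block_label n (transposed x) r c c')"
  using zero_count_narrow[OF hx blk] zero_count_narrow[OF valid_ext_transposed[OF hx] block_transposed] assms
  unfolding block_label_def tile_rule_def by auto

lemma block_tile_rule_BGY:
  assumes "c' - c = int n" "r' - r = int n + 1"
  shows "tile_rule n (block_label n x c' r r') (block_label n (transposed x) r' c c')
    (block_label n x c r r') (block_label n (transposed x) r c c')"
  using zero_count_narrow[OF hx blk] zero_count_wide[OF valid_ext_transposed[OF hx] block_transposed]
    v1_block_corners_01 assms
  unfolding block_label_def tile_rule_def by auto

lemma block_tile_rule_J:
  assumes "c' - c = int n + 1" "r' - r = int n + 1"
  shows "tile_rule n (block_label n x c' r r') (block_label n (transposed x) r' c c')
    (block_label n x c r r') (block_label n (transposed x) r c c')"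
  using zero_count_wide[OF hx blk] zero_count_wide[OF valid_ext_transposed[OF hx] block_transposed]
    v1_block_corners_01 assms n
  unfolding block_label_def tile_rule_def by auto

end

lemma block_tile_rule:
  assumes hx: "valid_ext n x" and n: "n \<ge> 1" and blk: "block x c c' r r'"
    and "c' - c = int n \<or> c' - c = int n + 1" and "r' - r = int n \<or> r' - r = int n + 1"
  shows "tile_rule n (block_label n x c' r r') (block_label n (transposed x) r' c c')
    (block_label n x c r r') (block_label n (transposed x) r c c')"
proof -
  consider "c' - c = int n" "r' - r = int n" | "c' - c = int n" "r' - r = int n + 1"
    | "c' - c = int n + 1" "r' - r = int n" | "c' - c = int n + 1" "r' - r = int n + 1"
    using assms(4,5) by blast
  then show ?thesis
  proof cases
    case 3
    then show ?thesis
      using block_tile_rule_BGY[OF valid_ext_transposed[OF hx] n block_transposed[OF hx n blk]] tile_rule_swap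
      by simp
  qed (use block_tile_rule_W[OF hx n blk] block_tile_rule_BGY[OF hx n blk] block_tile_rule_J[OF hx n blk] in auto)
qed

definition desubst :: "nat \<Rightarrow> config \<Rightarrow> config" where
  "desubst n x = (\<lambda>(p,q).
     let c = zero_row (transposed x) p; c' = zero_row (transposed x) (p+1);
         r = zero_row x q; r' = zero_row x (q+1)
     in (block_label n x c' r r', block_label n (transposed x) r' c c',
         block_label n x c r r', block_label n (transposed x) r c c'))"

lemma block_zero_rows:
  assumes hx: "valid_ext n x" and n: "n \<ge> 1"
  shows "block x (zero_row (transposed x) p) (zero_row (transposed x) (p+1)) (zero_row x q) (zero_row x (q+1))"
  using row_type_zero_row[OF hx n] zero_row_less[OF hx n] row_type_between_zero_rows[OF hx n]
    row_type_zero_row[OF valid_ext_transposed[OF hx] n] zero_row_less[OF valid_ext_transposed[OF hx] n]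
    row_type_between_zero_rows[OF valid_ext_transposed[OF hx] n]
  unfolding block_def by auto

lemma valid_ext_desubst:
  assumes hx: "valid_ext n x" and n: "n \<ge> 1"
  shows "valid_ext n (desubst n x)"
proof -
  have "desubst n x m \<in> tiles_ext n" for m
    unfolding desubst_def tiles_ext_iff_tile_rule split_beta Let_def
    by (rule block_tile_rule[OF hx n block_zero_rows[OF hx n]] zero_row_gap[OF valid_ext_transposed[OF hx] n]
        zero_row_gap[OF hx n])+
  then show ?thesis
    unfolding valid_ext_def by (simp add: desubst_def Let_def RIGHT_def LEFT_def TOP_def BOTTOM_def)
qed

lemma row_type_desubst: "row_type (desubst n x) q = (if zero_row x (q+1) - zero_row x q = int n then 1 else 0)"
  unfolding row_type_def hlab_def desubst_def LEFT_def block_label_def by (simp add: Let_def)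

text \<open>Infinite descent on the period: a row period \<open>k\<close> of \<open>x\<close> becomes a row period \<open>K < k\<close> of the
  desubstituted configuration.\<close>

lemma no_row_period:
  assumes n: "n \<ge> 1"
  shows "k > 0 \<Longrightarrow> valid_ext n x \<Longrightarrow> \<exists>b. row_type x (b + k) \<noteq> row_type x b"
proof (induct "nat k" arbitrary: k x rule: less_induct)
  case less
  show ?case
  proof (rule ccontr)
    assume "\<nexists>b. row_type x (b + k) \<noteq> row_type x b"
    then obtain K where K: "0 < K" "K < k" "\<And>q. zero_row x (q + K) = zero_row x q + k"
      using zero_row_period[OF less.prems(2) n less.prems(1)] by auto
    have "row_type (desubst n x) (q + K) = row_type (desubst n x) q" for q
      using K(3)[of q] K(3)[of "q+1"] unfolding row_type_desubst by (simp add: ac_simps)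
    then show False
      using less.hyps[of K "desubst n x"] K valid_ext_desubst[OF less.prems(2) n] by auto
  qed
qed

lemma no_nonzero_row_period:
  assumes "n \<ge> 1" "valid_ext n x" "k \<noteq> 0"
  shows "\<exists>b. row_type x (b + k) \<noteq> row_type x b"
proof (cases "k > 0")
  case False
  then obtain b where "row_type x (b + - k) \<noteq> row_type x b" using no_row_period[OF assms(1) _ assms(2), of "-k"] assms(3) by auto
  then show ?thesis by (intro exI[of _ "b - k"]) auto
qed (use no_row_period[OF assms(1) _ assms(2)] in auto)

lemma row_type_shift_invariant:
  assumes hx: "valid_ext n x" and sh: "shift (k1,k2) x = x"
  shows "row_type x (b + k2) = row_type x b"
proof -
  have "x (-k1 + k1, b + k2) = x (-k1, b)" using fun_cong[OF sh, of "(-k1, b)"] by (simp add: shift_def)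
  then have "hlab x 0 (b + k2) = hlab x (-k1) b" unfolding hlab_def by simp
  then show ?thesis using v0_hlab[OF hx, of 0 "b + k2"] v0_hlab[OF hx, of "-k1" b] unfolding row_type_def by simp
qed

lemma shift_transposed: "shift (k1,k2) (transposed x) = transposed (shift (k2,k1) x)"
  by (simp add: shift_def transposed_def fun_eq_iff)

theorem valid_ext_aperiodic:
  assumes n: "n \<ge> 1" and hx: "valid_ext n x" and k: "k \<noteq> (0,0)"
  shows "shift k x \<noteq> x"
proof
  assume sh: "shift k x = x"
  obtain k1 k2 where kk: "k = (k1,k2)" by (cases k)
  show False
  proof (cases "k2 = 0")
    case False
    then show False using no_nonzero_row_period[OF n hx] row_type_shift_invariant[OF hx] sh kk by blast
  next
    case True
    then have "k1 \<noteq> 0" "shift (0,k1) (transposed x) = transposed x" using k kk sh by (simp_all add: shift_transposed)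
    then show False using no_nonzero_row_period[OF n valid_ext_transposed[OF hx]]
      row_type_shift_invariant[OF valid_ext_transposed[OF hx]] by blast
  qed
qed

section \<open>Substitution and existence of valid configurations\<close>

lemma tiles_cases [consumes 1, case_names W B G Y hat_B hat_G hat_Y J]:
  assumes "t \<in> tiles n"
  obtains (W) i j where "t = ((1,1,i+1),(1,1,j+1),(1,1,i),(1,1,j))" "1 \<le> i" "i \<le> int n" "1 \<le> j" "j \<le> int n"
  | (B) i where "t = ((0,0,i+1),(1,1,1),(0,0,i),(1,1,int n))" "0 \<le> i" "i \<le> int n - 1"
  | (G) i where "t = ((0,1,i+1),(1,1,1),(0,0,i),(1,1,int n+1))" "0 \<le> i" "i \<le> int n"
  | (Y) i where "t = ((0,1,i+1),(1,1,2),(0,1,i),(1,1,int n+1))" "1 \<le> i" "i \<le> int n"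
  | (hat_B) i where "t = hat ((0,0,i+1),(1,1,1),(0,0,i),(1,1,int n))" "0 \<le> i" "i \<le> int n - 1"
  | (hat_G) i where "t = hat ((0,1,i+1),(1,1,1),(0,0,i),(1,1,int n+1))" "0 \<le> i" "i \<le> int n"
  | (hat_Y) i where "t = hat ((0,1,i+1),(1,1,2),(0,1,i),(1,1,int n+1))" "1 \<le> i" "i \<le> int n"
  | (J) k l r s where "t = junction n k l r s" "(k,l) \<in> JP" "(r,s) \<in> JP"
      "junction n k l r s \<noteq> junction n 0 0 1 1" "junction n k l r s \<noteq> junction n 1 1 0 0"
  using assms unfolding tiles_def W_def B_def G_def Y_def J_def by blast

lemma hat_in_tiles:
  assumes "t \<in> tiles n"
  shows "hat t \<in> tiles n"
proof -
  have "hat ` W n \<subseteq> W n" unfolding W_def hat_def by auto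
  moreover have "hat ` J n \<subseteq> J n"
  proof
    fix u assume "u \<in> hat ` J n"
    then obtain k l r s where "u = hat (junction n k l r s)" "(k,l) \<in> JP" "(r,s) \<in> JP"
       "junction n k l r s \<noteq> junction n 0 0 1 1" "junction n k l r s \<noteq> junction n 1 1 0 0"
      unfolding J_def by blast
    then show "u \<in> J n" unfolding J_def hat_def junction_def
      by (intro DiffI CollectI exI[of _ r] exI[of _ s] exI[of _ k] exI[of _ l]) auto
  qed
  ultimately show ?thesis using assms unfolding tiles_def by (auto intro: imageI)
qed

lemma v0_tiles:
  assumes "t \<in> tiles n"
  shows "v0 (RIGHT t) = v0 (LEFT t) \<and> v0 (TOP t) = v0 (BOTTOM t) \<and> v0 (LEFT t) \<in> {0,1} \<and> v0 (BOTTOM t) \<in> {0,1}"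
proof -
  have "t \<in> tiles_ext n" using assms tiles_subset_tiles_ext by blast
  then show ?thesis unfolding tiles_ext_iff_tile_rule' by (rule tile_rule_v0)
qed

definition sub_size :: "nat \<Rightarrow> label \<Rightarrow> int" where
  "sub_size n L = int n - v0 L"

definition sub_offset :: "label \<Rightarrow> int" where
  "sub_offset L = 1 - v1 L + v0 L"

definition sub_threshold :: "label \<Rightarrow> int" where
  "sub_threshold L = v2 L - v0 L"

definition sub_bit :: "label \<Rightarrow> int \<Rightarrow> int" where
  "sub_bit L m = (if m > sub_threshold L then 1 else 0)"

text \<open>A tile \<open>t\<close> with left label \<open>L\<close> and bottom label \<open>Bo\<close> is replaced by the block of the cells
  \<open>sub_cell n t i j\<close>, \<open>0 \<le> i \<le> sub_size n Bo\<close>, \<open>0 \<le> j \<le> sub_size n L\<close>: a junction tile at the corner,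
  tiles of \<open>B\<close>, \<open>G\<close>, \<open>Y\<close> along the bottom row, their hats along the left column and tiles of \<open>W\<close>
  inside. The counter of \<open>L\<close> is stored in the second letters along the left column, which are 0
  exactly at the heights \<open>j \<le> sub_threshold L\<close>; this inverts \<open>zero_count\<close>.\<close>

definition sub_cell :: "nat \<Rightarrow> tile \<Rightarrow> int \<Rightarrow> int \<Rightarrow> tile" where
  "sub_cell n t i j = (let L = LEFT t; Bo = BOTTOM t; s = sub_offset L; l = sub_offset Bo in
     if i = 0 \<and> j = 0 then
       ((0, sub_bit Bo 1, l), (0, sub_bit L 1, s), (0, s, sub_bit L 1 + int n), (0, l, sub_bit Bo 1 + int n))
     else if i = 0 then
       ((1,1,1 + sub_bit L j), (0, sub_bit L (j+1), s + j), (1,1, int n + sub_bit L (j+1)), (0, sub_bit L j, s + j - 1))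
     else if j = 0 then
       ((0, sub_bit Bo (i+1), l + i), (1,1,1 + sub_bit Bo i), (0, sub_bit Bo i, l + i - 1), (1,1,int n + sub_bit Bo (i+1)))
     else
       ((1,1,sub_bit L j + i + 1), (1,1, sub_bit Bo i + j + 1), (1,1, sub_bit L j + i), (1,1, sub_bit Bo i + j)))"

lemma sub_cell_hat: "sub_cell n (hat t) j i = hat (sub_cell n t i j)"
  unfolding sub_cell_def Let_def hat_sides by (simp add: hat_def)

lemma sub_cell_right_left: "0 \<le> i \<Longrightarrow> RIGHT (sub_cell n t i j) = LEFT (sub_cell n t (i+1) j)"
  unfolding sub_cell_def Let_def by (simp add: RIGHT_def LEFT_def)

definition sub_right_compatible :: "nat \<Rightarrow> tile \<Rightarrow> bool" where
  "sub_right_compatible n t \<longleftrightarrow>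
     sub_bit (BOTTOM t) (sub_size n (BOTTOM t) + 1) = sub_offset (RIGHT t) \<and>
     sub_offset (BOTTOM t) + sub_size n (BOTTOM t) = sub_bit (RIGHT t) 1 + int n \<and>
     (\<forall>j. 1 \<le> j \<and> j \<le> sub_size n (LEFT t) \<longrightarrow>
        sub_bit (LEFT t) j + sub_size n (BOTTOM t) + 1 = int n + sub_bit (RIGHT t) (j+1))"

definition admissible_label :: "nat \<Rightarrow> label \<Rightarrow> bool" where
  "admissible_label n L \<longleftrightarrow>
     (\<exists>v. L = (0,1,v) \<and> 1 \<le> v \<and> v \<le> int n + 1) \<or> (\<exists>v. L = (1,1,v) \<and> 1 \<le> v \<and> v \<le> int n + 1) \<or>
     (\<exists>v. L = (0,0,v) \<and> 0 \<le> v \<and> v \<le> int n)"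

lemmas sub_simps = sub_bit_def sub_size_def sub_offset_def sub_threshold_def
  RIGHT_def LEFT_def BOTTOM_def TOP_def

lemma tiles_sub_right_compatible:
  assumes "t \<in> tiles n"
  shows "sub_right_compatible n t"
  using assms
proof (cases rule: tiles_cases)
  case (J k l r s)
  then have "k \<in> {0,1}" "l \<in> {0,1}" "r \<in> {0,1}" "s \<in> {0,1}" unfolding JP_def by auto
  with J(1) show ?thesis unfolding sub_right_compatible_def junction_def by (auto simp: sub_simps)
qed (simp_all add: sub_right_compatible_def sub_simps hat_def)

text \<open>The last conjunct keeps the corner cell of the block of \<open>t\<close> off the excluded junction tile
  \<open>j_n^{0,0,1,1}\<close>; applied to \<open>hat t\<close> it excludes \<open>j_n^{1,1,0,0}\<close>.\<close>

lemma tiles_admissible: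
  assumes n: "n \<ge> 1" and t: "t \<in> tiles n"
  shows "admissible_label n (LEFT t) \<and> admissible_label n (BOTTOM t) \<and>
    \<not> (sub_offset (BOTTOM t) = 0 \<and> sub_threshold (LEFT t) = 0)"
  using t
proof (cases rule: tiles_cases)
  case (J k l r s)
  then have "(k = 0 \<and> l = 0) \<or> (k = 0 \<and> l = 1) \<or> (k = 1 \<and> l = 1)"
    "(r = 0 \<and> s = 0) \<or> (r = 0 \<and> s = 1) \<or> (r = 1 \<and> s = 1)" unfolding JP_def by auto
  with J(1) n show ?thesis unfolding junction_def admissible_label_def
    by (elim disjE conjE; simp add: sub_simps)
qed (use n in \<open>simp_all add: admissible_label_def sub_simps hat_def\<close>)

lemma admissible_label_bounds:
  "admissible_label n L \<Longrightarrow> (sub_size n L = int n \<or> sub_size n L = int n - 1) \<and>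
   (sub_offset L = 0 \<or> sub_offset L = 1) \<and> 0 \<le> sub_threshold L \<and>
   sub_offset L + sub_threshold L \<le> int n + 1 \<and> 1 \<le> sub_offset L + sub_threshold L \<and>
   (sub_threshold L = 0 \<longrightarrow> sub_offset L = 1)"
  unfolding admissible_label_def by (auto simp: sub_simps)

lemma sub_cell_right_left_across:
  assumes t: "t \<in> tiles n" and n: "n \<ge> 1" and tt: "RIGHT t = LEFT t'" and j: "0 \<le> j" "j \<le> sub_size n (LEFT t)"
  shows "RIGHT (sub_cell n t (sub_size n (BOTTOM t)) j) = LEFT (sub_cell n t' 0 j)"
proof -
  have hb: "sub_right_compatible n t" using tiles_sub_right_compatible[OF t] .
  have g: "sub_size n (BOTTOM t) \<ge> 0" using admissible_label_bounds[of n "BOTTOM t"] tiles_admissible[OF n t] n by auto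
  show ?thesis
  proof (cases "j = 0")
    case True then show ?thesis using hb g unfolding sub_cell_def Let_def sub_right_compatible_def tt[symmetric]
      by (cases "sub_size n (BOTTOM t) = 0") (simp_all add: RIGHT_def LEFT_def)
  next
    case False
    then have "sub_bit (LEFT t) j + sub_size n (BOTTOM t) + 1 = int n + sub_bit (RIGHT t) (j+1)" using hb j unfolding sub_right_compatible_def by auto
    then show ?thesis using False g unfolding sub_cell_def Let_def tt[symmetric]
      by (cases "sub_size n (BOTTOM t) = 0") (simp_all add: RIGHT_def LEFT_def)
  qed
qed

lemma sub_bit_01: "sub_bit L m = 0 \<or> sub_bit L m = 1" unfolding sub_bit_def by simp

lemma sub_cell_BGY:
  assumes t: "t \<in> tiles n" and n: "n \<ge> 1" and i: "1 \<le> i" "i \<le> sub_size n (BOTTOM t)"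
  shows "sub_cell n t i 0 \<in> B n \<union> G n \<union> Y n"
proof -
  note f = admissible_label_bounds[of n "BOTTOM t"] tiles_admissible[OF n t]
  define l where "l = sub_offset (BOTTOM t)"
  define z where "z = sub_threshold (BOTTOM t)"
  have c: "sub_cell n t i 0 = ((0, sub_bit (BOTTOM t) (i+1), l + i), (1,1,1 + sub_bit (BOTTOM t) i), (0, sub_bit (BOTTOM t) i, l + i - 1), (1,1,int n + sub_bit (BOTTOM t) (i+1)))"
    unfolding sub_cell_def Let_def l_def using i by simp
  consider "i + 1 \<le> z" | "i = z" | "i > z" by linarith
  then show ?thesis
  proof cases
    case 1
    then have e: "sub_bit (BOTTOM t) i = 0" "sub_bit (BOTTOM t) (i+1) = 0" unfolding sub_bit_def z_def by auto
    have "sub_cell n t i 0 \<in> B n" unfolding c e B_def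
      by (intro CollectI exI[of _ "l + i - 1"]) (use f 1 i in \<open>auto simp: l_def z_def\<close>)
    then show ?thesis by blast
  next
    case 2
    then have e: "sub_bit (BOTTOM t) i = 0" "sub_bit (BOTTOM t) (i+1) = 1" unfolding sub_bit_def z_def by auto
    have "sub_cell n t i 0 \<in> G n" unfolding c e G_def
      by (intro CollectI exI[of _ "l + i - 1"]) (use f 2 i in \<open>auto simp: l_def z_def\<close>)
    then show ?thesis by blast
  next
    case 3
    then have e: "sub_bit (BOTTOM t) i = 1" "sub_bit (BOTTOM t) (i+1) = 1" unfolding sub_bit_def z_def by auto
    have "sub_cell n t i 0 \<in> Y n" unfolding c e Y_def
      by (intro CollectI exI[of _ "l + i - 1"]) (use f 3 i in \<open>auto simp: l_def z_def\<close>)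
    then show ?thesis by blast
  qed
qed

lemma sub_cell_J:
  assumes t: "t \<in> tiles n" and n: "n \<ge> 1"
  shows "sub_cell n t 0 0 \<in> J n"
proof -
  have gB: "admissible_label n (BOTTOM t)" and gL: "admissible_label n (LEFT t)"
    and x1: "\<not> (sub_offset (BOTTOM t) = 0 \<and> sub_threshold (LEFT t) = 0)"
    using tiles_admissible[OF n t] by auto
  have x2: "\<not> (sub_offset (LEFT t) = 0 \<and> sub_threshold (BOTTOM t) = 0)"
    using tiles_admissible[OF n hat_in_tiles[OF t]] by simp
  note fB = admissible_label_bounds[OF gB] and fL = admissible_label_bounds[OF gL]
  define k where "k = sub_bit (BOTTOM t) 1"
  define l where "l = sub_offset (BOTTOM t)"
  define r where "r = sub_bit (LEFT t) 1"
  define s where "s = sub_offset (LEFT t)"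
  have c: "sub_cell n t 0 0 = junction n k l r s" unfolding sub_cell_def Let_def junction_def k_def l_def r_def s_def by simp
  have kl: "(k,l) \<in> JP" using fB unfolding JP_def k_def l_def sub_bit_def by auto
  have rs: "(r,s) \<in> JP" using fL unfolding JP_def r_def s_def sub_bit_def by auto
  have ne1: "junction n k l r s \<noteq> junction n 0 0 1 1"
    using x1 fL unfolding junction_def k_def l_def r_def s_def sub_bit_def by auto
  have ne2: "junction n k l r s \<noteq> junction n 1 1 0 0"
    using x2 fB unfolding junction_def k_def l_def r_def s_def sub_bit_def by auto
  show ?thesis unfolding c J_def using kl rs ne1 ne2 by blast
qed

lemma sub_cell_W:
  assumes t: "t \<in> tiles n" and n: "n \<ge> 1" and i: "1 \<le> i" "i \<le> sub_size n (BOTTOM t)" and j: "1 \<le> j" "j \<le> sub_size n (LEFT t)"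
  shows "sub_cell n t i j \<in> W n"
proof -
  have h1: "sub_bit (LEFT t) j + sub_size n (BOTTOM t) + 1 = int n + sub_bit (RIGHT t) (j+1)"
    using tiles_sub_right_compatible[OF t] j unfolding sub_right_compatible_def by auto
  have h2: "sub_bit (BOTTOM t) i + sub_size n (LEFT t) + 1 = int n + sub_bit (TOP t) (i+1)"
    using tiles_sub_right_compatible[OF hat_in_tiles[OF t]] i unfolding sub_right_compatible_def by auto
  have c: "sub_cell n t i j = ((1,1,sub_bit (LEFT t) j + i + 1), (1,1, sub_bit (BOTTOM t) i + j + 1), (1,1, sub_bit (LEFT t) j + i), (1,1, sub_bit (BOTTOM t) i + j))"
    unfolding sub_cell_def Let_def using i j by simp
  show ?thesis unfolding c W_def
    by (intro CollectI exI[of _ "sub_bit (LEFT t) j + i"] exI[of _ "sub_bit (BOTTOM t) i + j"])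
       (use h1 h2 i j sub_bit_01[of "LEFT t" j] sub_bit_01[of "BOTTOM t" i] sub_bit_01[of "RIGHT t" "j+1"] sub_bit_01[of "TOP t" "i+1"] in auto)
qed

lemma sub_cell_in_tiles:
  assumes t: "t \<in> tiles n" and n: "n \<ge> 1" and i: "0 \<le> i" "i \<le> sub_size n (BOTTOM t)" and j: "0 \<le> j" "j \<le> sub_size n (LEFT t)"
  shows "sub_cell n t i j \<in> tiles n"
proof -
  consider "i = 0" "j = 0" | "i = 0" "j \<ge> 1" | "i \<ge> 1" "j = 0" | "i \<ge> 1" "j \<ge> 1" using i j by linarith
  then show ?thesis
  proof cases
    case 1 then show ?thesis using sub_cell_J[OF t n] unfolding tiles_def by blast
  next
    case 2
    have "sub_cell n (hat t) j 0 \<in> B n \<union> G n \<union> Y n"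
      by (rule sub_cell_BGY[OF hat_in_tiles[OF t] n]) (use 2 j in simp_all)
    then have "hat (sub_cell n (hat t) j 0) \<in> hat ` B n \<union> hat ` G n \<union> hat ` Y n" by blast
    moreover have "hat (sub_cell n (hat t) j 0) = sub_cell n t 0 j" using sub_cell_hat[of n t j 0] 2 by simp
    ultimately have "sub_cell n t 0 j \<in> tiles n" unfolding tiles_def by auto
    then show ?thesis using 2 by simp
  next
    case 3 then show ?thesis using sub_cell_BGY[OF t n _ i(2)] unfolding tiles_def by blast
  next
    case 4 then show ?thesis using sub_cell_W[OF t n _ i(2) _ j(2)] unfolding tiles_def by blast
  qed
qed

definition sub_width :: "nat \<Rightarrow> config \<Rightarrow> int \<Rightarrow> int" where
  "sub_width n x p = (if v0 (BOTTOM (x (p,0))) = 1 then int n else int n + 1)"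

definition sub_start :: "nat \<Rightarrow> config \<Rightarrow> nat \<Rightarrow> int" where
  "sub_start n x p = (\<Sum>i<p. sub_width n x (int i))"

definition sub_index :: "nat \<Rightarrow> config \<Rightarrow> int \<Rightarrow> nat" where
  "sub_index n x a = (LEAST p. a < sub_start n x (Suc p))"

definition sub_pos :: "nat \<Rightarrow> config \<Rightarrow> int \<Rightarrow> int" where
  "sub_pos n x a = a - sub_start n x (sub_index n x a)"

lemma sub_start_0: "sub_start n x 0 = 0"
  unfolding sub_start_def by simp

lemma sub_start_Suc: "sub_start n x (Suc p) = sub_start n x p + sub_width n x (int p)"
  unfolding sub_start_def by simp

lemma sub_width_ge_1: "n \<ge> 1 \<Longrightarrow> sub_width n x p \<ge> 1"
  unfolding sub_width_def by auto

lemma strict_mono_sub_start: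
  assumes "n \<ge> 1"
  shows "strict_mono (sub_start n x)"
proof (unfold strict_mono_Suc_iff, intro allI)
  fix p
  show "sub_start n x p < sub_start n x (Suc p)" using sub_width_ge_1[OF assms, of x "int p"] by (simp add: sub_start_Suc)
qed

lemma sub_start_ge: "n \<ge> 1 \<Longrightarrow> sub_start n x p \<ge> int p"
proof (induct p)
  case (Suc p)
  then show ?case using sub_width_ge_1[of n x "int p"] by (simp add: sub_start_Suc)
qed (simp add: sub_start_0)

context
  fixes n :: nat and x :: config
  assumes n: "n \<ge> 1"
begin

lemma sub_index:
  assumes a: "0 \<le> a"
  shows "sub_start n x (sub_index n x a) \<le> a \<and> a < sub_start n x (Suc (sub_index n x a))"
proof -
  have "a < sub_start n x (Suc (nat a))" using sub_start_ge[OF n, where x=x and p="Suc (nat a)"] a by simp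
  then have "a < sub_start n x (Suc (sub_index n x a))" unfolding sub_index_def by (rule LeastI)
  moreover have "sub_start n x (sub_index n x a) \<le> a"
  proof (cases "sub_index n x a")
    case (Suc p)
    then have "\<not> a < sub_start n x (Suc p)"
      using not_less_Least[of p "\<lambda>p. a < sub_start n x (Suc p)"] unfolding sub_index_def by simp
    with Suc show ?thesis by simp
  qed (use a sub_start_0 in simp)
  ultimately show ?thesis by blast
qed

lemma sub_index_eqI:
  assumes "sub_start n x p \<le> a" "a < sub_start n x (Suc p)"
  shows "sub_index n x a = p"
proof -
  have "0 \<le> a" using assms sub_start_ge[OF n, where x=x and p=p] by simp
  then have s: "sub_start n x (sub_index n x a) \<le> a" "a < sub_start n x (Suc (sub_index n x a))"
    using sub_index by blast+
  note mono = strict_mono_less_eq[OF strict_mono_sub_start[OF n, of x]]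
  have "\<not> sub_index n x a < p" using s(2) assms(1) mono[of "Suc (sub_index n x a)" p] by linarith
  moreover have "\<not> p < sub_index n x a" using s(1) assms(2) mono[of "Suc p" "sub_index n x a"] by linarith
  ultimately show ?thesis by simp
qed

lemma sub_index_less:
  assumes "0 \<le> a" "a < sub_start n x w"
  shows "sub_index n x a < w"
proof (rule ccontr)
  assume "\<not> ?thesis"
  then have "sub_start n x w \<le> sub_start n x (sub_index n x a)"
    using strict_mono_less_eq[OF strict_mono_sub_start[OF n, of x]] by simp
  then show False using sub_index[OF assms(1)] assms(2) by simp
qed

lemma sub_pos_bounds: "0 \<le> a \<Longrightarrow> 0 \<le> sub_pos n x a \<and> sub_pos n x a < sub_width n x (int (sub_index n x a))"
  using sub_index[of a] unfolding sub_pos_def by (simp add: sub_start_Suc)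

end

definition subst :: "nat \<Rightarrow> config \<Rightarrow> config" where
  "subst n x = (\<lambda>(a,b). sub_cell n (x (int (sub_index n x a), int (sub_index n (transposed x) b)))
     (sub_pos n x a) (sub_pos n (transposed x) b))"

lemma subst_transposed: "subst n (transposed x) = transposed (subst n x)"
  by (simp add: subst_def transposed_def sub_cell_hat fun_eq_iff)

definition rect :: "nat \<Rightarrow> nat \<Rightarrow> (int \<times> int) set" where
  "rect w h = {0..<int w} \<times> {0..<int h}"

definition valid_on :: "nat \<Rightarrow> config \<Rightarrow> (int \<times> int) set \<Rightarrow> bool" where
  "valid_on n x S \<longleftrightarrow> (\<forall>m\<in>S. x m \<in> tiles n) \<and>
     (\<forall>a b. (a,b) \<in> S \<longrightarrow> (a+1,b) \<in> S \<longrightarrow> RIGHT (x (a,b)) = LEFT (x (a+1,b))) \<and>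
     (\<forall>a b. (a,b) \<in> S \<longrightarrow> (a,b+1) \<in> S \<longrightarrow> TOP (x (a,b)) = BOTTOM (x (a,b+1)))"

lemma valid_rect_transposed: "valid_on n x (rect w h) \<Longrightarrow> valid_on n (transposed x) (rect h w)"
  unfolding valid_on_def rect_def transposed_def by (auto simp: hat_in_tiles)

lemma valid_rect_mono: "valid_on n x (rect w h) \<Longrightarrow> w' \<le> w \<Longrightarrow> h' \<le> h \<Longrightarrow> valid_on n x (rect w' h')"
  unfolding valid_on_def rect_def by force

lemma v0_column_uniform:
  assumes hx: "valid_on n x (rect w h)" and p: "0 \<le> p" "p < int w"
  shows "q < h \<Longrightarrow> v0 (BOTTOM (x (p, int q))) = v0 (BOTTOM (x (p,0)))"
proof (induct q)
  case (Suc q)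
  have t: "x (p, int q) \<in> tiles n" and "TOP (x (p, int q)) = BOTTOM (x (p, int q + 1))"
    using hx p Suc.prems unfolding valid_on_def rect_def by simp_all
  then show ?case using Suc v0_tiles[OF t] by (simp add: add.commute)
qed simp

lemma sub_size_bottom:
  assumes hx: "valid_on n x (rect w h)" and "0 \<le> p" "p < int w" "0 \<le> q" "q < int h"
  shows "sub_size n (BOTTOM (x (p,q))) + 1 = sub_width n x p"
proof -
  have t: "x (p, q) \<in> tiles n" using hx assms unfolding valid_on_def rect_def by simp
  have "v0 (BOTTOM (x (p, int (nat q)))) = v0 (BOTTOM (x (p,0)))"
    using v0_column_uniform[OF hx, of p "nat q"] assms by simp
  then show ?thesis using v0_tiles[OF t] assms unfolding sub_width_def sub_size_def by auto
qed

lemma sub_size_left: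
  assumes "valid_on n x (rect w h)" "0 \<le> p" "p < int w" "0 \<le> q" "q < int h"
  shows "sub_size n (LEFT (x (p,q))) + 1 = sub_width n (transposed x) q"
  using sub_size_bottom[OF valid_rect_transposed[OF assms(1)] assms(4,5,2,3)] by (simp add: transposed_def)

context
  fixes n :: nat and x and w h
  assumes n: "n \<ge> 1" and hx: "valid_on n x (rect w h)"
begin

lemma subst_cell:
  assumes a: "0 \<le> a" "a < sub_start n x w" and b: "0 \<le> b" "b < sub_start n (transposed x) h"
  shows "x (int (sub_index n x a), int (sub_index n (transposed x) b)) \<in> tiles n \<and>
    0 \<le> sub_pos n x a \<and>
    sub_pos n x a \<le> sub_size n (BOTTOM (x (int (sub_index n x a), int (sub_index n (transposed x) b)))) \<and>
    0 \<le> sub_pos n (transposed x) b \<and>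
    sub_pos n (transposed x) b \<le> sub_size n (LEFT (x (int (sub_index n x a), int (sub_index n (transposed x) b))))"
proof -
  let ?p = "int (sub_index n x a)" and ?q = "int (sub_index n (transposed x) b)"
  have p: "?p < int w" and q: "?q < int h" using sub_index_less[OF n a] sub_index_less[OF n b] by simp_all
  then have "x (?p, ?q) \<in> tiles n" using hx unfolding valid_on_def rect_def by simp
  moreover have "sub_size n (BOTTOM (x (?p, ?q))) + 1 = sub_width n x ?p"
    "sub_size n (LEFT (x (?p, ?q))) + 1 = sub_width n (transposed x) ?q"
    using sub_size_bottom[OF hx] sub_size_left[OF hx] p q by simp_all
  ultimately show ?thesis using sub_pos_bounds[OF n a(1), of x] sub_pos_bounds[OF n b(1), of "transposed x"]
    by simp
qed

lemma subst_in_tiles: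
  "0 \<le> a \<Longrightarrow> a < sub_start n x w \<Longrightarrow> 0 \<le> b \<Longrightarrow> b < sub_start n (transposed x) h \<Longrightarrow> subst n x (a,b) \<in> tiles n"
  using subst_cell sub_cell_in_tiles[OF _ n] unfolding subst_def by simp

lemma subst_right_left:
  assumes a: "0 \<le> a" "a + 1 < sub_start n x w" and b: "0 \<le> b" "b < sub_start n (transposed x) h"
  shows "RIGHT (subst n x (a,b)) = LEFT (subst n x (a+1,b))"
proof -
  define p q where "p = sub_index n x a" and "q = sub_index n (transposed x) b"
  define t where "t = x (int p, int q)"
  have "a < sub_start n x w" using a by simp
  note cell = subst_cell[OF a(1) this b, folded p_def q_def t_def]
  have "q < h" using sub_index_less[OF n b] unfolding q_def .
  have s: "sub_start n x p \<le> a" "a < sub_start n x (Suc p)" using sub_index[OF n a(1), of x] unfolding p_def by simp_all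
  have sa: "subst n x (a,b) = sub_cell n t (sub_pos n x a) (sub_pos n (transposed x) b)"
    unfolding subst_def p_def q_def t_def by simp
  show ?thesis
  proof (cases "a + 1 < sub_start n x (Suc p)")
    case True
    then have "sub_index n x (a+1) = p" using sub_index_eqI[OF n] s by simp
    then have "subst n x (a+1,b) = sub_cell n t (sub_pos n x a + 1) (sub_pos n (transposed x) b)"
      unfolding subst_def sub_pos_def p_def q_def t_def by (simp add: algebra_simps)
    then show ?thesis using sa sub_cell_right_left[of "sub_pos n x a"] cell a by simp
  next
    case False
    then have next_block: "a + 1 = sub_start n x (Suc p)" using s by simp
    then have "sub_index n x (a+1) = Suc p"
      using sub_index_eqI[OF n] sub_width_ge_1[OF n, of x "int (Suc p)"] by (simp add: sub_start_Suc)
    moreover have "Suc p < w" using sub_index_less[OF n _ a(2)] calculation a by simp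
    ultimately have "subst n x (a+1,b) = sub_cell n (x (int (Suc p), int q)) 0 (sub_pos n (transposed x) b)"
      unfolding subst_def sub_pos_def q_def using next_block by simp
    moreover have "RIGHT t = LEFT (x (int (Suc p), int q))"
      using hx \<open>Suc p < w\<close> \<open>q < h\<close> unfolding valid_on_def rect_def t_def by (simp add: add.commute)
    moreover have "sub_pos n x a = sub_size n (BOTTOM t)"
      using sub_size_bottom[OF hx, of "int p" "int q"] cell next_block \<open>Suc p < w\<close> \<open>q < h\<close>
      unfolding sub_pos_def p_def t_def by (simp add: sub_start_Suc)
    ultimately show ?thesis using sa sub_cell_right_left_across[OF _ n] cell unfolding t_def by simp
  qed
qed

end

lemma subst_top_bottom:
  assumes "n \<ge> 1" "valid_on n x (rect w h)"
    and "0 \<le> a" "a < sub_start n x w" "0 \<le> b" "b + 1 < sub_start n (transposed x) h"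
  shows "TOP (subst n x (a,b)) = BOTTOM (subst n x (a,b+1))"
proof -
  have "RIGHT (subst n (transposed x) (b,a)) = LEFT (subst n (transposed x) (b+1,a))"
    using subst_right_left[OF assms(1) valid_rect_transposed[OF assms(2)]] assms(3-) by simp
  then show ?thesis unfolding subst_transposed by (simp add: transposed_def)
qed

lemma valid_rect_subst:
  assumes n: "n \<ge> 1" and hx: "valid_on n x (rect w h)"
  shows "valid_on n (subst n x) (rect (nat (sub_start n x w)) (nat (sub_start n (transposed x) h)))"
  unfolding valid_on_def rect_def
  using subst_in_tiles[OF n hx] subst_right_left[OF n hx] subst_top_bottom[OF n hx] by auto

lemma subst_origin:
  assumes n: "n \<ge> 1"
  shows "subst n x (0,0) = sub_cell n (x (0,0)) 0 0"
proof -
  have "sub_index n y 0 = 0" for y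
    by (rule sub_index_eqI[OF n]) (use sub_width_ge_1[OF n, of y 0] in \<open>simp_all add: sub_start_Suc sub_start_0\<close>)
  then show ?thesis by (simp add: subst_def sub_pos_def sub_start_0)
qed

text \<open>A leftmost column of width \<open>n + 1\<close> makes the substituted rectangle strictly wider even for \<open>n = 1\<close>.\<close>

lemma sub_start_grows:
  assumes n: "n \<ge> 1" and corner: "v0 (BOTTOM (x (0,0))) = 0"
  shows "w \<ge> 1 \<Longrightarrow> sub_start n x w \<ge> int w + 1"
proof (induct w)
  case (Suc w)
  show ?case
  proof (cases w)
    case 0
    then show ?thesis using corner n by (simp add: sub_start_Suc sub_start_0 sub_width_def)
  next
    case (Suc w')
    then show ?thesis using Suc.hyps sub_width_ge_1[OF n, of x "int w"] by (simp add: sub_start_Suc)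
  qed
qed simp

lemma valid_rect_grows:
  assumes n: "n \<ge> 1" and x: "valid_on n x (rect w h)" "1 \<le> w" "1 \<le> h"
    and corner: "v0 (LEFT (x (0,0))) = 0" "v0 (BOTTOM (x (0,0))) = 0"
  shows "\<exists>x' w' h'. valid_on n x' (rect w' h') \<and> w < w' \<and> h < h' \<and>
    v0 (LEFT (x' (0,0))) = 0 \<and> v0 (BOTTOM (x' (0,0))) = 0"
proof (intro exI conjI)
  show "valid_on n (subst n x) (rect (nat (sub_start n x w)) (nat (sub_start n (transposed x) h)))"
    by (rule valid_rect_subst[OF n x(1)])
  have "sub_start n x w \<ge> int w + 1" by (rule sub_start_grows[where x=x, OF n corner(2) x(2)])
  then show "w < nat (sub_start n x w)" by linarith
  have "v0 (BOTTOM (transposed x (0,0))) = 0" using corner(1) by (simp add: transposed_def)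
  then have "sub_start n (transposed x) h \<ge> int h + 1" by (rule sub_start_grows[where x="transposed x", OF n _ x(3)])
  then show "h < nat (sub_start n (transposed x) h)" by linarith
  show "v0 (LEFT (subst n x (0,0))) = 0" "v0 (BOTTOM (subst n x (0,0))) = 0"
    unfolding subst_origin[OF n] sub_cell_def Let_def by (simp_all add: LEFT_def BOTTOM_def)
qed

lemma ex_valid_square:
  assumes n: "n \<ge> 1"
  shows "\<exists>x. valid_on n x (rect N N)"
proof -
  have "\<exists>x w h. valid_on n x (rect w h) \<and> max 1 N \<le> w \<and> max 1 N \<le> h \<and>
    v0 (LEFT (x (0,0))) = 0 \<and> v0 (BOTTOM (x (0,0))) = 0"
  proof (induct N)
    case 0
    have "junction n 0 0 0 0 \<in> tiles n" unfolding tiles_def J_def JP_def junction_def by auto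
    then have "valid_on n (\<lambda>_. junction n 0 0 0 0) (rect 1 1)" unfolding valid_on_def rect_def by auto
    then show ?case by (intro exI[of _ "\<lambda>_. junction n 0 0 0 0"] exI[of _ 1]) (simp add: junction_def LEFT_def BOTTOM_def)
  next
    case (Suc N)
    then obtain x w h where "valid_on n x (rect w h)" "max 1 N \<le> w" "max 1 N \<le> h"
      "v0 (LEFT (x (0,0))) = 0" "v0 (BOTTOM (x (0,0))) = 0" by blast
    from valid_rect_grows[OF n this(1) _ _ this(4,5)] this(2,3) show ?case by fastforce
  qed
  then show ?thesis using valid_rect_mono by (metis max.bounded_iff)
qed

lemma finite_tiles: "finite (tiles n)"
proof (rule finite_subset)
  let ?L = "{0,1} \<times> {0,1} \<times> {0..int n + 2}"
  show "tiles n \<subseteq> ?L \<times> ?L \<times> ?L \<times> ?L"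
  proof
    fix t assume "t \<in> tiles n"
    then show "t \<in> ?L \<times> ?L \<times> ?L \<times> ?L"
      by (cases rule: tiles_cases) (auto simp: hat_def junction_def JP_def)
  qed
qed simp

definition box :: "nat \<Rightarrow> (int \<times> int) set" where
  "box N = {-int N..<int N} \<times> {-int N..<int N}"

lemma box_mono: "N \<le> M \<Longrightarrow> box N \<subseteq> box M"
  unfolding box_def by auto

lemma valid_on_subset: "valid_on n x S \<Longrightarrow> S' \<subseteq> S \<Longrightarrow> valid_on n x S'"
  unfolding valid_on_def by blast

lemma valid_on_cong: "(\<And>m. m \<in> S \<Longrightarrow> x m = y m) \<Longrightarrow> valid_on n x S \<longleftrightarrow> valid_on n y S"
  unfolding valid_on_def by auto

lemma valid_iff_valid_on_boxes: "valid n x \<longleftrightarrow> (\<forall>N. valid_on n x (box N))"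
proof
  assume "\<forall>N. valid_on n x (box N)"
  moreover have "(a,b) \<in> box N" "(a+1,b) \<in> box N" "(a,b+1) \<in> box N" if "N = nat (\<bar>a\<bar> + \<bar>b\<bar>) + 2" for a b N
    using that unfolding box_def by auto
  ultimately show "valid n x" unfolding valid_def valid_on_def by (metis surj_pair)
next
  assume "valid n x"
  then show "\<forall>N. valid_on n x (box N)" unfolding valid_def valid_on_def by blast
qed

lemma ex_valid_box:
  assumes n: "n \<ge> 1"
  shows "\<exists>y. valid_on n y (box N)"
proof -
  obtain x where x: "valid_on n x (rect (2*N) (2*N))" using ex_valid_square[OF n] by blast
  have "valid_on n (\<lambda>(a,b). x (a + int N, b + int N)) (box N)"
    using x unfolding valid_on_def rect_def box_def by (auto simp: algebra_simps)
  then show ?thesis by blast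
qed

text \<open>Compactness: a valid configuration of the plane is obtained from valid boxes of every size
  by choosing nested patches, each of which extends to valid boxes of all larger sizes.\<close>

definition extendable :: "nat \<Rightarrow> nat \<Rightarrow> config \<Rightarrow> bool" where
  "extendable n N p \<longleftrightarrow> (\<forall>M\<ge>N. \<exists>y. valid_on n y (box M) \<and> restrict y (box N) = p)"

lemma extendable_step:
  assumes "extendable n N p"
  shows "\<exists>p'. extendable n (Suc N) p' \<and> restrict p' (box N) = p"
proof -
  define y where "y M = (SOME y. valid_on n y (box M) \<and> restrict y (box N) = p)" for M
  have y: "valid_on n (y M) (box M) \<and> restrict (y M) (box N) = p" if "M \<ge> N" for M
  proof -
    have "\<exists>y. valid_on n y (box M) \<and> restrict y (box N) = p" using assms that unfolding extendable_def by blast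
    then show ?thesis unfolding y_def by (rule someI_ex)
  qed
  define A where "A = {Suc N..}"
  define f where "f M = restrict (y M) (box (Suc N))" for M
  have "f M \<in> (\<Pi>\<^sub>E m \<in> box (Suc N). tiles n)" if "M \<in> A" for M
  proof -
    have "N \<le> M" "Suc N \<le> M" using that unfolding A_def by auto
    then have "valid_on n (y M) (box (Suc N))" using y[of M] valid_on_subset box_mono[of "Suc N" M] by blast
    then show ?thesis unfolding f_def valid_on_def by auto
  qed
  then have "f ` A \<subseteq> (\<Pi>\<^sub>E m \<in> box (Suc N). tiles n)" by blast
  moreover have "finite (\<Pi>\<^sub>E m \<in> box (Suc N). tiles n)"
    by (rule finite_PiE) (auto simp: box_def finite_tiles)
  ultimately have fin: "finite (f ` A)" using finite_subset by blast
  have "infinite A" unfolding A_def by (rule infinite_Ici)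
  then obtain M0 where M0: "M0 \<in> A" "infinite {M \<in> A. f M = f M0}"
    using pigeonhole_infinite[OF _ fin] by blast
  have "extendable n (Suc N) (f M0)" unfolding extendable_def
  proof (intro allI impI)
    fix M' assume "Suc N \<le> M'"
    from M0(2) obtain M where M: "M \<in> A" "f M = f M0" "M' \<le> M"
      unfolding infinite_nat_iff_unbounded_le by blast
    then have "N \<le> M" unfolding A_def by simp
    then have "valid_on n (y M) (box M')" using y[of M] valid_on_subset box_mono[OF M(3)] by blast
    with M show "\<exists>y. valid_on n y (box M') \<and> restrict y (box (Suc N)) = f M0" unfolding f_def by blast
  qed
  moreover have "restrict (f M0) (box N) = p"
    using y[of M0] M0(1) box_mono[of N "Suc N"] unfolding f_def A_def by (simp add: Int_absorb1)
  ultimately show ?thesis by blast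
qed

fun nested_patch :: "nat \<Rightarrow> nat \<Rightarrow> config" where
  "nested_patch n 0 = (\<lambda>_. undefined)"
| "nested_patch n (Suc N) = (SOME p. extendable n (Suc N) p \<and> restrict p (box N) = nested_patch n N)"

lemma nested_patch:
  assumes n: "n \<ge> 1"
  shows "extendable n N (nested_patch n N) \<and> restrict (nested_patch n (Suc N)) (box N) = nested_patch n N"
proof -
  have step: "extendable n (Suc N) (nested_patch n (Suc N)) \<and> restrict (nested_patch n (Suc N)) (box N) = nested_patch n N"
    if "extendable n N (nested_patch n N)" for N
  proof -
    have "\<exists>p. extendable n (Suc N) p \<and> restrict p (box N) = nested_patch n N"
      using extendable_step[OF that] .
    then show ?thesis unfolding nested_patch.simps by (rule someI_ex)
  qed
  have "extendable n N (nested_patch n N)"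
  proof (induct N)
    case 0
    show ?case unfolding extendable_def using ex_valid_box[OF n] by (auto simp: box_def restrict_def)
  next
    case (Suc N)
    then show ?case using step by blast
  qed
  with step show ?thesis by blast
qed

lemma nested_patch_agree:
  assumes n: "n \<ge> 1" and "N \<le> M" "m \<in> box N"
  shows "nested_patch n M m = nested_patch n N m"
  using assms(2,3)
proof (induct M)
  case (Suc M)
  show ?case
  proof (cases "N = Suc M")
    case False
    then have "N \<le> M" using Suc.prems by simp
    then have "nested_patch n (Suc M) m = nested_patch n M m"
      using nested_patch[OF n, of M] box_mono Suc.prems(2) by (metis restrict_apply' subsetD)
    with Suc.hyps \<open>N \<le> M\<close> Suc.prems(2) show ?thesis by simp
  qed simp
qed simp

lemma ex_valid:
  assumes n: "n \<ge> 1"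
  shows "\<exists>x. valid n x"
proof -
  define lev where "lev m = nat (max \<bar>fst m\<bar> \<bar>snd m\<bar>) + 1" for m :: "int \<times> int"
  have lev: "m \<in> box (lev m)" for m unfolding box_def lev_def by (cases m) auto
  define x where "x m = nested_patch n (lev m) m" for m
  have "valid_on n x (box N)" for N
  proof -
    obtain y where y: "valid_on n y (box N)" "restrict y (box N) = nested_patch n N"
      using nested_patch[OF n, of N] unfolding extendable_def by blast
    have "x m = y m" if "m \<in> box N" for m
      using nested_patch_agree[OF n _ that, of "lev m"] nested_patch_agree[OF n _ lev[of m], of N]
        y(2) that unfolding x_def by (metis nat_le_linear restrict_apply')
    with y(1) show ?thesis using valid_on_cong by blast
  qed
  then show ?thesis using valid_iff_valid_on_boxes by blast
qed

theorem corollaryB: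
  fixes n :: nat
  assumes "n \<ge> 1"
  shows "Omega n \<noteq> {} \<and> (\<forall>x\<in>Omega n. \<forall>k. k \<noteq> (0,0) \<longrightarrow> shift k x \<noteq> x)"
  using ex_valid[OF assms] valid_ext_aperiodic[OF assms valid_imp_valid_ext] unfolding Omega_def by blast

end
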